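(* Let $\Sigma$ be a Riemann surface with a holomorphic cubic differential $\phi$ having a pole of order $n+3\ge4$ at a puncture $p$, and identify a punctured closed neighborhood of $p$ with the glued surface $M$ built from the closed half-planes $\overline H_1,\dots,\overline H_n$ (each $\overline H_i\cong\{w:\mathrm{Re}\,w\ge0\}$ with $\phi=dw^3$) as described in the context. Let $g$ be a conformal metric on $\Sigma$ satisfying $\kappa_g=-1+\|\phi\|_g^2$ with $\kappa_g\le0$. Then there are constants $C,r_0>0$ such that for every $i\in\{1,\dots,n\}$, writing $g=e^{u}|dw|^2$ on $\overline H_i$, one has $0\le u(w)\le C|w|^{1/2}e^{-\sqrt6|w|}$ for all $w\in\overline H_i$ with $|w|\ge r_0$.
   Context: For $g=e^u|dw|^2$, $\phi=\phi(w)dw^3$: $\|\phi\|_g^2=e^{-3u}|\phi|^2$, $\kappa_g=-\frac12e^{-u}\Delta u$. The surface $M$: there are $a_i>0$, $b_i\in\mathbb R$; in $\overline H_i$ let $T_i=\{ib_i+\rho e^{i\theta}:\rho\ge0,\pi/6\le\theta\le\pi/2\}$ and $B_i=\{i(b_i-a_i)+\rho e^{i\theta}:\rho\ge0,-\pi/2\le\theta\le-\pi/6\}$; $M$ is the quotient of $\bigsqcup\overline H_i$ gluing $B_{i+1}$ to $T_i$ (indices mod $n$) by $w\mapsto e^{2\pi i/3}(w-i(b_{i+1}-a_{i+1}))+ib_i$; the identification with a punctured closed neighborhood of $p$ carries $\phi$ to the cubic differential induced by $dw^3$ (such an identification always exists). *)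

theory Defs
  imports "HOL-Analysis.Analysis"
begin

definition partial_x :: "(complex \<Rightarrow> real) \<Rightarrow> complex \<Rightarrow> real" where
  "partial_x f z = deriv (\<lambda>t. f (Complex t (Im z))) (Re z)"

definition partial_y :: "(complex \<Rightarrow> real) \<Rightarrow> complex \<Rightarrow> real" where
  "partial_y f z = deriv (\<lambda>t. f (Complex (Re z) t)) (Im z)"

definition iter_partial :: "bool list \<Rightarrow> (complex \<Rightarrow> real) \<Rightarrow> complex \<Rightarrow> real" where
  "iter_partial ds f = foldr (\<lambda>d h. if d then partial_x h else partial_y h) ds f"

definition smooth_on :: "complex set \<Rightarrow> (complex \<Rightarrow> real) \<Rightarrow> bool" where
  "smooth_on S f \<longleftrightarrow> open S \<and>
     (\<forall>ds. continuous_on S (iter_partial ds f) \<and>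
        (\<forall>z\<in>S. (\<lambda>t. iter_partial ds f (Complex t (Im z))) differentiable (at (Re z)) \<and>
                (\<lambda>t. iter_partial ds f (Complex (Re z) t)) differentiable (at (Im z))))"

definition laplacian :: "(complex \<Rightarrow> real) \<Rightarrow> complex \<Rightarrow> real" where
  "laplacian u z = partial_x (partial_x u) z + partial_y (partial_y u) z"

text \<open>Gaussian curvature of g = e^u |dw|^2.\<close>
definition gauss_curv :: "(complex \<Rightarrow> real) \<Rightarrow> complex \<Rightarrow> real" where
  "gauss_curv u w = - (1/2) * exp (- u w) * laplacian u w"

text \<open>Squared g-norm of the cubic differential phi(w) dw^3.\<close>
definition cubic_norm_sq :: "(complex \<Rightarrow> real) \<Rightarrow> (complex \<Rightarrow> complex) \<Rightarrow> complex \<Rightarrow> real" where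
  "cubic_norm_sq u \<phi> w = exp (- 3 * u w) * (cmod (\<phi> w))\<^sup>2"

definition closed_half_plane :: "complex set" where
  "closed_half_plane = {w. Re w \<ge> 0}"

definition top_sector :: "real \<Rightarrow> complex set" where
  "top_sector b = {\<i> * of_real b + of_real \<rho> * cis \<theta> | \<rho> \<theta>. \<rho> \<ge> 0 \<and> pi/6 \<le> \<theta> \<and> \<theta> \<le> pi/2}"

definition bot_sector :: "real \<Rightarrow> real \<Rightarrow> complex set" where
  "bot_sector a b = {\<i> * of_real (b - a) + of_real \<rho> * cis \<theta> | \<rho> \<theta>. \<rho> \<ge> 0 \<and> - pi/2 \<le> \<theta> \<and> \<theta> \<le> - pi/6}"

text \<open>Gluing map from B_{i+1} (parameters a', b') to T_i (parameter b).\<close>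
definition glue_map :: "real \<Rightarrow> real \<Rightarrow> real \<Rightarrow> complex \<Rightarrow> complex" where
  "glue_map a' b' b w = cis (2 * pi / 3) * (w - \<i> * of_real (b' - a')) + \<i> * of_real b"

end

theory Submission
  imports Defs
begin

text \<open>In each chart the curvature equation is the Tzitzeica equation \<open>\<Delta>u = 2 exp u - 2 exp (-2u)\<close>,
  and \<open>\<kappa> \<le> 0\<close> means \<open>u \<ge> 0\<close>. Comparing \<open>u\<close> on discs with a logarithmic barrier that blows up on
  the boundary gives \<open>u = O(|w|^-2)\<close> in the sector \<open>|Im w| \<le> 2 Re w\<close>. Where \<open>u\<close> is that small,
  the equation is close to its linearisation \<open>\<Delta>u = 6u\<close>, and \<open>sqrt r * exp (- sqrt 6 * r)\<close> is a
  supersolution. So \<open>u\<close> minus a multiple of this barrier, with \<open>r\<close> the distance to a suitable centre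
  in each chart, cannot have a positive interior maximum.
  The sectors of different charts overlap through the gluing maps, which rotate by \<open>2 pi / 3\<close>.
  If the centres are chosen compatibly with these maps, a maximum on the boundary of one sector becomes
  an interior maximum in the neighbouring chart, so the comparison closes up around the puncture.\<close>

section \<open>Second derivatives at a local maximum\<close>

lemma local_max_imp_second_deriv_le:
  fixes \<phi> \<psi> \<phi>1 \<psi>1 :: "real \<Rightarrow> real"
  assumes d: "\<delta> > 0"
    and p1: "\<And>t. \<bar>t - x\<bar> < \<delta> \<Longrightarrow> (\<phi> has_real_derivative \<phi>1 t) (at t)"
    and p2: "(\<phi>1 has_real_derivative \<phi>2) (at x)"
    and q1: "\<And>t. \<bar>t - x\<bar> < \<delta> \<Longrightarrow> (\<psi> has_real_derivative \<psi>1 t) (at t)"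
    and q2: "(\<psi>1 has_real_derivative \<psi>2) (at x)"
    and mx: "\<And>t. \<bar>t - x\<bar> < \<delta> \<Longrightarrow> \<phi> t - \<psi> t \<le> \<phi> x - \<psi> x"
  shows "\<phi>2 \<le> \<psi>2"
proof (rule ccontr)
  assume "\<not> \<phi>2 \<le> \<psi>2"
  hence pos: "\<phi>2 - \<psi>2 > 0" by simp
  define h where "h = (\<lambda>t. \<phi> t - \<psi> t)"
  define h1 where "h1 = (\<lambda>t. \<phi>1 t - \<psi>1 t)"
  have hd: "\<And>t. \<bar>t - x\<bar> < \<delta> \<Longrightarrow> (h has_real_derivative h1 t) (at t)"
    unfolding h_def h1_def using p1 q1 by (intro derivative_intros) auto
  have h1d: "(h1 has_real_derivative \<phi>2 - \<psi>2) (at x)"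
    unfolding h1_def using p2 q2 by (intro derivative_intros) auto
  have "h1 x = 0"
    by (rule DERIV_local_max[OF hd[of x] d]) (use d mx in \<open>auto simp: h_def abs_minus_commute\<close>)
  obtain e where e: "e > 0" "\<And>k. k > 0 \<Longrightarrow> k < e \<Longrightarrow> h1 x < h1 (x + k)"
    using DERIV_pos_inc_right[OF h1d pos] by blast
  define t where "t = x + min \<delta> e / 2"
  have xt: "x < t" and tx: "\<bar>t - x\<bar> < \<delta>" using d e by (simp_all add: t_def)
  obtain z where z: "z > x" "z < t" "h t - h x = (t - x) * h1 z"
    using MVT2[OF xt, of h h1] hd tx by (smt (verit) abs_of_nonneg)
  have "h1 z > 0"
    using e(2)[of "z - x"] z \<open>h1 x = 0\<close> d e by (simp add: t_def)
  hence "h t > h x" using z xt by (smt (verit) mult_pos_pos)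
  thus False using mx[OF tx] unfolding h_def by simp
qed

lemma smooth_on_imp_continuous_on:
  assumes "smooth_on S f" shows "continuous_on S f"
proof -
  have "continuous_on S (iter_partial [] f)" using assms unfolding smooth_on_def by blast
  thus ?thesis by (simp add: iter_partial_def)
qed

lemma smooth_on_partial_x_derivatives:
  assumes sm: "smooth_on S u" and tS: "Complex t y \<in> S"
  shows "((\<lambda>s. u (Complex s y)) has_real_derivative partial_x u (Complex t y)) (at t)"
    and "((\<lambda>s. partial_x u (Complex s y)) has_real_derivative partial_x (partial_x u) (Complex t y)) (at t)"
proof -
  have "\<And>ds. \<forall>z\<in>S. (\<lambda>s. iter_partial ds u (Complex s (Im z))) differentiable (at (Re z))"
    using sm unfolding smooth_on_def by blast
  from bspec[OF this tS] have "\<And>ds. (\<lambda>s. iter_partial ds u (Complex s y)) differentiable (at t)"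
    by simp
  from this[of "[]"] this[of "[True]"] show
    "((\<lambda>s. u (Complex s y)) has_real_derivative partial_x u (Complex t y)) (at t)"
    "((\<lambda>s. partial_x u (Complex s y)) has_real_derivative partial_x (partial_x u) (Complex t y)) (at t)"
    by (simp_all add: iter_partial_def partial_x_def DERIV_deriv_iff_real_differentiable)
qed

lemma smooth_on_partial_y_derivatives:
  assumes sm: "smooth_on S u" and tS: "Complex x t \<in> S"
  shows "((\<lambda>s. u (Complex x s)) has_real_derivative partial_y u (Complex x t)) (at t)"
    and "((\<lambda>s. partial_y u (Complex x s)) has_real_derivative partial_y (partial_y u) (Complex x t)) (at t)"
proof -
  have "\<And>ds. \<forall>z\<in>S. (\<lambda>s. iter_partial ds u (Complex (Re z) s)) differentiable (at (Im z))"
    using sm unfolding smooth_on_def by blast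
  from bspec[OF this tS] have "\<And>ds. (\<lambda>s. iter_partial ds u (Complex x s)) differentiable (at t)"
    by simp
  from this[of "[]"] this[of "[False]"] show
    "((\<lambda>s. u (Complex x s)) has_real_derivative partial_y u (Complex x t)) (at t)"
    "((\<lambda>s. partial_y u (Complex x s)) has_real_derivative partial_y (partial_y u) (Complex x t)) (at t)"
    by (simp_all add: iter_partial_def partial_y_def DERIV_deriv_iff_real_differentiable)
qed

lemma laplacian_le_at_local_max:
  assumes sm: "smooth_on S u" and zS: "ball z \<delta> \<subseteq> S" and d: "\<delta> > 0"
    and bx1: "\<And>t. \<bar>t - Re z\<bar> < \<delta> \<Longrightarrow> ((\<lambda>t. B (Complex t (Im z))) has_real_derivative Bx1 t) (at t)"
    and bx2: "(Bx1 has_real_derivative Bx2) (at (Re z))"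
    and by1: "\<And>t. \<bar>t - Im z\<bar> < \<delta> \<Longrightarrow> ((\<lambda>t. B (Complex (Re z) t)) has_real_derivative By1 t) (at t)"
    and by2: "(By1 has_real_derivative By2) (at (Im z))"
    and mx: "\<And>w. w \<in> ball z \<delta> \<Longrightarrow> u w - B w \<le> u z - B z"
  shows "laplacian u z \<le> Bx2 + By2"
proof -
  have inx: "Complex t (Im z) \<in> ball z \<delta>" if "\<bar>t - Re z\<bar> < \<delta>" for t
    using that by (simp add: dist_norm cmod_def complex_eq_iff)
  have iny: "Complex (Re z) t \<in> ball z \<delta>" if "\<bar>t - Im z\<bar> < \<delta>" for t
    using that by (simp add: dist_norm cmod_def complex_eq_iff)
  have zS': "Complex (Re z) (Im z) \<in> S" using zS d by auto
  have "partial_x (partial_x u) z \<le> Bx2"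
  proof (rule local_max_imp_second_deriv_le[OF d _ _ bx1 bx2])
    show "((\<lambda>s. u (Complex s (Im z))) has_real_derivative partial_x u (Complex t (Im z))) (at t)"
      if "\<bar>t - Re z\<bar> < \<delta>" for t
      using smooth_on_partial_x_derivatives(1)[OF sm] inx[OF that] zS by blast
    show "((\<lambda>t. partial_x u (Complex t (Im z))) has_real_derivative partial_x (partial_x u) z) (at (Re z))"
      using smooth_on_partial_x_derivatives(2)[OF sm zS'] by simp
    show "u (Complex t (Im z)) - B (Complex t (Im z)) \<le> u (Complex (Re z) (Im z)) - B (Complex (Re z) (Im z))"
      if "\<bar>t - Re z\<bar> < \<delta>" for t
      using mx[OF inx[OF that]] by simp
  qed
  moreover have "partial_y (partial_y u) z \<le> By2"
  proof (rule local_max_imp_second_deriv_le[OF d _ _ by1 by2])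
    show "((\<lambda>s. u (Complex (Re z) s)) has_real_derivative partial_y u (Complex (Re z) t)) (at t)"
      if "\<bar>t - Im z\<bar> < \<delta>" for t
      using smooth_on_partial_y_derivatives(1)[OF sm] iny[OF that] zS by blast
    show "((\<lambda>t. partial_y u (Complex (Re z) t)) has_real_derivative partial_y (partial_y u) z) (at (Im z))"
      using smooth_on_partial_y_derivatives(2)[OF sm zS'] by simp
    show "u (Complex (Re z) t) - B (Complex (Re z) t) \<le> u (Complex (Re z) (Im z)) - B (Complex (Re z) (Im z))"
      if "\<bar>t - Im z\<bar> < \<delta>" for t
      using mx[OF iny[OF that]] by simp
  qed
  ultimately show ?thesis by (simp add: laplacian_def)
qed

lemma radial_line_derivatives:
  assumes g1: "\<And>s. s \<in> U \<Longrightarrow> (g has_real_derivative g1 s) (at s)"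
    and g2: "\<And>s. s \<in> U \<Longrightarrow> (g1 has_real_derivative g2 s) (at s)"
    and xU: "(x - a)^2 + Y \<in> U"
  shows "((\<lambda>t. g ((t - a)^2 + Y)) has_real_derivative g1 ((x - a)^2 + Y) * (2 * (x - a))) (at x)"
    and "((\<lambda>t. g1 ((t - a)^2 + Y) * (2 * (t - a))) has_real_derivative
           g2 ((x - a)^2 + Y) * (4 * (x - a)^2) + 2 * g1 ((x - a)^2 + Y)) (at x)"
proof -
  have in1: "((\<lambda>t. (t - a)^2 + Y) has_real_derivative 2 * (x - a)) (at x)"
    by (auto intro!: derivative_eq_intros)
  show "((\<lambda>t. g ((t - a)^2 + Y)) has_real_derivative g1 ((x - a)^2 + Y) * (2 * (x - a))) (at x)"
    using DERIV_chain2[OF g1[OF xU] in1] .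
  have lin: "((\<lambda>t. 2 * (t - a)) has_real_derivative 2) (at x)"
    by (auto intro!: derivative_eq_intros)
  have "((\<lambda>t. g1 ((t - a)^2 + Y) * (2 * (t - a))) has_real_derivative
          g2 ((x - a)^2 + Y) * (2 * (x - a)) * (2 * (x - a)) + 2 * g1 ((x - a)^2 + Y)) (at x)"
    using DERIV_mult[OF DERIV_chain2[OF g2[OF xU] in1] lin] by simp
  thus "((\<lambda>t. g1 ((t - a)^2 + Y) * (2 * (t - a))) has_real_derivative
           g2 ((x - a)^2 + Y) * (4 * (x - a)^2) + 2 * g1 ((x - a)^2 + Y)) (at x)"
    by (simp add: power2_eq_square algebra_simps)
qed

lemma laplacian_le_radial_at_local_max:
  assumes sm: "smooth_on S u" and zS: "ball z \<delta> \<subseteq> S" and d: "\<delta> > 0"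
    and g1: "\<And>s. s \<in> U \<Longrightarrow> (g has_real_derivative g1 s) (at s)"
    and g2: "\<And>s. s \<in> U \<Longrightarrow> (g1 has_real_derivative g2 s) (at s)"
    and inU: "\<And>w. w \<in> ball z \<delta> \<Longrightarrow> (cmod (w - c))^2 \<in> U"
    and mx: "\<And>w. w \<in> ball z \<delta> \<Longrightarrow> u w - g ((cmod (w - c))^2) \<le> u z - g ((cmod (z - c))^2)"
  shows "laplacian u z \<le> 4 * (cmod (z - c))^2 * g2 ((cmod (z - c))^2) + 4 * g1 ((cmod (z - c))^2)"
proof -
  define X where "X = (Re z - Re c)^2"
  define Y where "Y = (Im z - Im c)^2"
  have sq: "(cmod (Complex s t - c))^2 = (s - Re c)^2 + (t - Im c)^2" for s t
    by (simp add: cmod_power2)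
  have inx: "Complex t (Im z) \<in> ball z \<delta>" if "\<bar>t - Re z\<bar> < \<delta>" for t
    using that by (simp add: dist_norm cmod_def complex_eq_iff)
  have iny: "Complex (Re z) t \<in> ball z \<delta>" if "\<bar>t - Im z\<bar> < \<delta>" for t
    using that by (simp add: dist_norm cmod_def complex_eq_iff)
  have zz: "X + Y \<in> U" using inU[of z] d by (simp add: cmod_power2 X_def Y_def)
  have "laplacian u z \<le> (g2 (X + Y) * (4 * X) + 2 * g1 (X + Y)) + (g2 (Y + X) * (4 * Y) + 2 * g1 (Y + X))"
  proof (rule laplacian_le_at_local_max[OF sm zS d, where B = "\<lambda>w. g ((cmod (w - c))^2)"])
    show "((\<lambda>t. g ((cmod (Complex t (Im z) - c))^2)) has_real_derivative
       g1 ((t - Re c)^2 + Y) * (2 * (t - Re c))) (at t)" if "\<bar>t - Re z\<bar> < \<delta>" for t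
    proof -
      have "(t - Re c)^2 + Y \<in> U" using inU[OF inx[OF that]] by (simp add: sq Y_def)
      from radial_line_derivatives(1)[where x = t and a = "Re c" and Y = Y, OF g1 g2 this]
      show ?thesis by (simp add: sq Y_def)
    qed
    show "((\<lambda>t. g1 ((t - Re c)^2 + Y) * (2 * (t - Re c))) has_real_derivative
       g2 (X + Y) * (4 * X) + 2 * g1 (X + Y)) (at (Re z))"
      using radial_line_derivatives(2)[where x = "Re z" and a = "Re c" and Y = Y, OF g1 g2] zz
      by (simp add: X_def)
    show "((\<lambda>t. g ((cmod (Complex (Re z) t - c))^2)) has_real_derivative
       g1 ((t - Im c)^2 + X) * (2 * (t - Im c))) (at t)" if "\<bar>t - Im z\<bar> < \<delta>" for t
    proof -
      have "(t - Im c)^2 + X \<in> U" using inU[OF iny[OF that]] by (simp add: sq X_def add.commute)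
      from radial_line_derivatives(1)[where x = t and a = "Im c" and Y = X, OF g1 g2 this]
      show ?thesis by (simp add: sq X_def add.commute)
    qed
    show "((\<lambda>t. g1 ((t - Im c)^2 + X) * (2 * (t - Im c))) has_real_derivative
       g2 (Y + X) * (4 * Y) + 2 * g1 (Y + X)) (at (Im z))"
      using radial_line_derivatives(2)[where x = "Im z" and a = "Im c" and Y = X, OF g1 g2] zz
      by (simp add: Y_def add.commute)
    show "u w - g ((cmod (w - c))^2) \<le> u z - g ((cmod (z - c))^2)" if "w \<in> ball z \<delta>" for w
      using mx[OF that] .
  qed
  also have "\<dots> = 4 * (cmod (z - c))^2 * g2 ((cmod (z - c))^2) + 4 * g1 ((cmod (z - c))^2)"
    by (simp add: cmod_power2 X_def Y_def add.commute algebra_simps)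
  finally show ?thesis .
qed

section \<open>The Tzitzeica equation and quadratic decay\<close>

definition tzitzeica :: "real \<Rightarrow> real" where
  "tzitzeica x = 2 * exp x - 2 * exp (- 2 * x)"

lemma tzitzeica_le_imp_le: "tzitzeica x \<le> tzitzeica y \<Longrightarrow> x \<le> y"
  unfolding tzitzeica_def by (smt (verit) exp_less_mono)

lemma exp_minus_le_quadratic:
  fixes y :: real assumes "y \<ge> 0" shows "exp (- y) \<le> 1 - y + y^2/2"
proof -
  have e: "1 + y + y^2/2 \<le> exp y" by (rule exp_lower_Taylor_quadratic[OF assms])
  have p: "1 + y + y^2/2 > 0" using assms by (simp add: add_pos_nonneg)
  have q: "(1 - y + y^2/2) * (1 + y + y^2/2) = 1 + y^4/4"
    by (simp add: algebra_simps power2_eq_square power4_eq_xxxx)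
  have "exp (- y) * (1 + y + y^2/2) \<le> exp (-y) * exp y"
    using e by (intro mult_left_mono) auto
  also have "\<dots> = 1" by (simp flip: exp_add)
  also have "\<dots> \<le> (1 - y + y^2/2) * (1 + y + y^2/2)" unfolding q by simp
  finally show ?thesis using p by (meson mult_le_cancel_right_pos)
qed

lemma tzitzeica_ge_linearization:
  fixes x :: real assumes "x \<ge> 0" shows "6 * x - 3 * x^2 \<le> tzitzeica x"
proof -
  have "1 + x + x^2/2 \<le> exp x" by (rule exp_lower_Taylor_quadratic[OF assms])
  moreover have "exp (- (2 * x)) \<le> 1 - 2 * x + (2 * x)^2/2"
    by (rule exp_minus_le_quadratic) (use assms in simp)
  ultimately show ?thesis unfolding tzitzeica_def by (simp add: power2_eq_square)
qed

lemma exp_le_tzitzeica: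
  fixes \<epsilon> x :: real
  assumes e: "0 < \<epsilon>" "\<epsilon> \<le> 1/2" and x: "\<epsilon> \<le> x"
  shows "\<epsilon> * exp x \<le> tzitzeica x"
proof -
  have "1 + 3 * x \<le> exp (3 * x)" by (rule exp_ge_add_one_self)
  hence "exp (- (3 * x)) \<le> 1 / (1 + 3 * x)"
    using e x by (simp add: exp_minus divide_simps)
  also have "\<dots> \<le> 1 / (1 + 3 * \<epsilon>)" using e x by (simp add: frac_le)
  also have "\<dots> \<le> (2 - \<epsilon>) / 2"
    using e by (simp add: divide_simps algebra_simps mult_nonneg_nonneg)
  finally have "2 * exp (- (3 * x)) \<le> 2 - \<epsilon>" by simp
  moreover have "tzitzeica x - \<epsilon> * exp x = exp x * (2 - \<epsilon> - 2 * exp (- (3 * x)))"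
    unfolding tzitzeica_def by (simp add: algebra_simps flip: exp_add)
  moreover have "0 \<le> exp x * (2 - \<epsilon> - 2 * exp (- (3 * x)))"
    using calculation(1) by simp
  ultimately show ?thesis by linarith
qed

lemma laplacian_eq_tzitzeica:
  assumes "gauss_curv u w = -1 + cubic_norm_sq u (\<lambda>_. 1) w"
  shows "laplacian u w = tzitzeica (u w)"
proof -
  have "laplacian u w = -2 * exp (u w) * (- (1/2) * exp (- u w) * laplacian u w)"
    by (simp add: exp_minus)
  also have "\<dots> = -2 * exp (u w) * (-1 + exp (- 3 * u w))"
    using assms by (simp add: gauss_curv_def cubic_norm_sq_def)
  also have "\<dots> = 2 * exp (u w) - 2 * (exp (u w) * exp (- 3 * u w))" by (simp add: algebra_simps)
  also have "exp (u w) * exp (- 3 * u w) = exp (- 2 * u w)" by (simp flip: exp_add)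
  finally show ?thesis by (simp add: tzitzeica_def)
qed

lemma nonneg_if_curvature_nonpos:
  assumes "gauss_curv u w = -1 + cubic_norm_sq u (\<lambda>_. 1) w" "gauss_curv u w \<le> 0"
  shows "u w \<ge> 0"
proof -
  have "exp (- 3 * u w) \<le> 1" using assms by (simp add: cubic_norm_sq_def)
  thus ?thesis by simp
qed

lemma continuous_on_radial:
  assumes "continuous_on {0..r^2} g"
  shows "continuous_on (cball w r) (\<lambda>z. g ((cmod (z - w))^2))"
proof -
  have "(cmod (z - w))^2 \<in> {0..r^2}" if "z \<in> cball w r" for z
    using that by (auto simp: dist_norm norm_minus_commute intro: power_mono)
  thus ?thesis by (intro continuous_on_compose2[OF assms]) (auto intro!: continuous_intros)
qed

lemma radial_barrier_comparison:
  fixes F g g1 g2 :: "real \<Rightarrow> real"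
  assumes sm: "smooth_on S u" and cS: "cball w r \<subseteq> S" and r: "r > 0"
    and U: "{0..r^2} \<subseteq> U"
    and g1: "\<And>s. s \<in> U \<Longrightarrow> (g has_real_derivative g1 s) (at s)"
    and g2: "\<And>s. s \<in> U \<Longrightarrow> (g1 has_real_derivative g2 s) (at s)"
    and lap: "\<And>z. z \<in> ball w r \<Longrightarrow> laplacian u z = F (u z)"
    and F_mono: "\<And>x y. F x \<le> F y \<Longrightarrow> x \<le> y"
    and super: "\<And>s. 0 \<le> s \<Longrightarrow> s < r^2 \<Longrightarrow> 4 * s * g2 s + 4 * g1 s \<le> F (g s)"
    and bdry: "\<And>z. cmod (z - w) = r \<Longrightarrow> u z < g (r^2)"
  shows "u w \<le> g 0"
proof -
  define \<Phi> where "\<Phi> = (\<lambda>z. u z - g ((cmod (z - w))^2))"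
  have "continuous_on {0..r^2} g"
    using g1 U by (intro continuous_at_imp_continuous_on) (meson DERIV_isCont subsetD)
  hence "continuous_on (cball w r) \<Phi>"
    unfolding \<Phi>_def using continuous_on_subset[OF smooth_on_imp_continuous_on[OF sm] cS]
    by (intro continuous_intros continuous_on_radial)
  then obtain \<zeta> where \<zeta>: "\<zeta> \<in> cball w r" and \<zeta>_max: "\<And>z. z \<in> cball w r \<Longrightarrow> \<Phi> z \<le> \<Phi> \<zeta>"
    using continuous_attains_sup[OF compact_cball] r by (metis empty_iff centre_in_cball less_le)
  have "\<Phi> \<zeta> \<le> 0"
  proof (rule ccontr)
    assume pos: "\<not> \<Phi> \<zeta> \<le> 0"
    have "cmod (\<zeta> - w) \<le> r" using \<zeta> by (simp add: dist_norm norm_minus_commute)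
    moreover have "cmod (\<zeta> - w) \<noteq> r" using bdry[of \<zeta>] pos by (auto simp: \<Phi>_def)
    ultimately have inner: "cmod (\<zeta> - w) < r" by linarith
    define \<delta> where "\<delta> = r - cmod (\<zeta> - w)"
    have \<delta>: "\<delta> > 0" using inner by (simp add: \<delta>_def)
    have ball_sub: "ball \<zeta> \<delta> \<subseteq> ball w r"
      by (simp add: ball_subset_ball_iff \<delta>_def dist_norm norm_minus_commute)
    define s where "s = (cmod (\<zeta> - w))^2"
    have s: "0 \<le> s" "s < r^2" using inner by (auto simp: s_def intro: power_strict_mono)
    have "laplacian u \<zeta> \<le> 4 * s * g2 s + 4 * g1 s"
      unfolding s_def
    proof (rule laplacian_le_radial_at_local_max[OF sm _ \<delta> g1 g2])
      show "ball \<zeta> \<delta> \<subseteq> S" using ball_sub ball_subset_cball cS by blast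
      show "(cmod (y - w))^2 \<in> U" if "y \<in> ball \<zeta> \<delta>" for y
      proof -
        have "y \<in> ball w r" using ball_sub that by blast
        hence "(cmod (y - w))^2 \<le> r^2" by (intro power_mono) (auto simp: dist_norm norm_minus_commute)
        thus ?thesis using U by auto
      qed
      show "u y - g ((cmod (y - w))^2) \<le> u \<zeta> - g ((cmod (\<zeta> - w))^2)" if "y \<in> ball \<zeta> \<delta>" for y
        using \<zeta>_max[of y] ball_sub that by (auto simp: \<Phi>_def)
    qed
    also have "\<dots> \<le> F (g s)" using super s by blast
    finally have "u \<zeta> \<le> g s"
      using lap[of \<zeta>] inner F_mono by (simp add: dist_norm norm_minus_commute)
    thus False using pos by (simp add: \<Phi>_def s_def)
  qed
  thus ?thesis using \<zeta>_max[of w] r by (simp add: \<Phi>_def)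
qed

lemma log_barrier:
  fixes P s :: real
  assumes s: "s < P"
  defines "g \<equiv> \<lambda>s. 8 / P + 2 * ln P - 2 * ln (P - s)"
  shows "(g has_real_derivative 2 / (P - s)) (at s)"
    and "((\<lambda>s. 2 / (P - s)) has_real_derivative 2 / (P - s)^2) (at s)"
    and "0 \<le> s \<Longrightarrow> 16 \<le> P \<Longrightarrow> 4 * s * (2 / (P - s)^2) + 4 * (2 / (P - s)) \<le> tzitzeica (g s)"
proof -
  define p where "p = P - s"
  have p: "p > 0" using s by (simp add: p_def)
  show "(g has_real_derivative 2 / (P - s)) (at s)"
    using s unfolding g_def by (auto intro!: derivative_eq_intros)
  show "((\<lambda>s. 2 / (P - s)) has_real_derivative 2 / (P - s)^2) (at s)"
    using s by (auto intro!: derivative_eq_intros simp: power2_eq_square)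
  assume s0: "0 \<le> s" and P: "16 \<le> P"
  define \<epsilon> where "\<epsilon> = 8 / P"
  have \<epsilon>: "0 < \<epsilon>" "\<epsilon> \<le> 1/2" using P by (simp_all add: \<epsilon>_def)
  have exp_g: "exp (g s) = exp \<epsilon> * (P^2 / p^2)"
  proof -
    have "exp (2 * ln x) = x^2" if "x > 0" for x :: real
    proof -
      have "2 * ln x = ln (x^2)" using that by (simp add: ln_realpow)
      thus ?thesis using that by simp
    qed
    thus ?thesis using p P
      by (simp add: g_def \<epsilon>_def p_def exp_diff exp_add power_divide)
  qed
  have "4 * s * (2 / p^2) + 4 * (2 / p) = 8 * (p + s) / p^2"
    using p by (simp add: field_simps power2_eq_square)
  also have "\<dots> = \<epsilon> * (P^2 / p^2)"
    using P by (simp add: \<epsilon>_def p_def power2_eq_square)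
  also have "\<dots> \<le> \<epsilon> * exp (g s)"
  proof -
    have "P^2 / p^2 \<le> exp \<epsilon> * (P^2 / p^2)" using mult_right_mono[of 1 "exp \<epsilon>" "P^2 / p^2"] \<epsilon> by simp
    hence "\<epsilon> * (P^2 / p^2) \<le> \<epsilon> * (exp \<epsilon> * (P^2 / p^2))" using \<epsilon> by (intro mult_left_mono) auto
    thus ?thesis by (simp only: exp_g)
  qed
  also have "\<dots> \<le> tzitzeica (g s)"
  proof (rule exp_le_tzitzeica[OF \<epsilon>])
    have "ln p \<le> ln P" using p s0 by (simp add: p_def)
    thus "\<epsilon> \<le> g s" by (simp add: g_def \<epsilon>_def p_def)
  qed
  finally show "4 * s * (2 / (P - s)^2) + 4 * (2 / (P - s)) \<le> tzitzeica (g s)"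
    by (simp add: p_def)
qed

lemma disc_estimate:
  assumes sm: "smooth_on S u" and cS: "cball w \<rho> \<subseteq> S" and \<rho>: "0 < \<rho>" "16 \<le> \<rho>^2"
    and eq: "\<And>z. z \<in> ball w \<rho> \<Longrightarrow> laplacian u z = tzitzeica (u z)"
  shows "u w \<le> 8 / \<rho>^2"
proof -
  obtain M where M: "\<And>z. z \<in> cball w \<rho> \<Longrightarrow> u z \<le> M"
    using continuous_attains_sup[OF compact_cball _ continuous_on_subset[OF smooth_on_imp_continuous_on[OF sm] cS]]
      \<rho>(1) by (metis centre_in_cball empty_iff less_le)
  define q where "q = min (1/2) (exp (- (M + 1) / 2))"
  have q: "0 < q" "q < 1" "M + 1 \<le> - 2 * ln q"
  proof -
    show "0 < q" "q < 1" by (auto simp: q_def)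
    have "ln q \<le> - (M + 1) / 2" using ln_mono[of q "exp (- (M + 1) / 2)"] \<open>0 < q\<close> by (simp add: q_def)
    thus "M + 1 \<le> - 2 * ln q" by simp
  qed
  define r where "r = \<rho> * sqrt (1 - q)"
  have "0 < sqrt (1 - q)" "sqrt (1 - q) < 1" using q by simp_all
  hence r: "0 < r" "r < \<rho>" "r^2 = \<rho>^2 * (1 - q)"
    using q \<rho> by (simp_all add: r_def power_mult_distrib)
  define g where "g = (\<lambda>s. 8 / \<rho>^2 + 2 * ln (\<rho>^2) - 2 * ln (\<rho>^2 - s))"
  have "r^2 < \<rho>^2" using r by (intro power_strict_mono) auto
  have "u w \<le> g 0"
  proof (rule radial_barrier_comparison[OF sm _ r(1), where U = "{..<\<rho>^2}" and F = tzitzeica])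
    show "cball w r \<subseteq> S" using subset_cball[of r \<rho> w] cS r by auto
    show "{0..r^2} \<subseteq> {..<\<rho>^2}" using \<open>r^2 < \<rho>^2\<close> by auto
    show "(g has_real_derivative 2 / (\<rho>^2 - s)) (at s)" if "s \<in> {..<\<rho>^2}" for s
      using log_barrier(1)[of s "\<rho>^2"] that by (simp add: g_def)
    show "((\<lambda>s. 2 / (\<rho>^2 - s)) has_real_derivative 2 / (\<rho>^2 - s)^2) (at s)" if "s \<in> {..<\<rho>^2}" for s
      using log_barrier(2)[of s "\<rho>^2"] that by simp
    show "laplacian u z = tzitzeica (u z)" if "z \<in> ball w r" for z
      using eq subset_ball[of r \<rho> w] r that by auto
    show "x \<le> y" if "tzitzeica x \<le> tzitzeica y" for x y using tzitzeica_le_imp_le[OF that] .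
    show "4 * s * (2 / (\<rho>^2 - s)^2) + 4 * (2 / (\<rho>^2 - s)) \<le> tzitzeica (g s)"
      if "0 \<le> s" "s < r^2" for s
      using log_barrier(3)[of s "\<rho>^2"] that \<open>r^2 < \<rho>^2\<close> \<rho>(2) by (simp add: g_def)
    show "u z < g (r^2)" if "cmod (z - w) = r" for z
    proof -
      have "\<rho>^2 - r^2 = q * \<rho>^2" using r(3) by (simp add: algebra_simps)
      hence "g (r^2) = 8 / \<rho>^2 - 2 * ln q" using q \<rho> by (simp add: g_def ln_mult)
      moreover have "u z \<le> M" using M that r by (simp add: dist_norm norm_minus_commute)
      moreover have "8 / \<rho>^2 > 0" using \<rho> by simp
      ultimately show ?thesis using q(3) by linarith
    qed
  qed
  thus ?thesis by (simp add: g_def)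
qed

lemma half_plane_quadratic_decay:
  assumes sm: "smooth_on S u" and hS: "closed_half_plane \<subseteq> S"
    and eq: "\<And>z. z \<in> closed_half_plane \<Longrightarrow> laplacian u z = tzitzeica (u z)"
    and w8: "Re w \<ge> 8"
  shows "u w \<le> 32 / (Re w)^2"
proof -
  have ball_H: "cball w (Re w / 2) \<subseteq> closed_half_plane"
  proof
    fix z assume "z \<in> cball w (Re w / 2)"
    hence "Re w - Re z \<le> Re w / 2" using abs_Re_le_cmod[of "w - z"] by (simp add: dist_norm)
    thus "z \<in> closed_half_plane" using w8 by (simp add: closed_half_plane_def)
  qed
  have "16 \<le> (Re w / 2)^2" using power_mono[of 4 "Re w / 2" 2] w8 by simp
  moreover have "laplacian u z = tzitzeica (u z)" if "z \<in> ball w (Re w / 2)" for z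
    using eq ball_H ball_subset_cball that by blast
  ultimately have "u w \<le> 8 / (Re w / 2)^2"
    using ball_H hS w8 by (intro disc_estimate[OF sm]) auto
  thus ?thesis by (simp add: power_divide)
qed

section \<open>The exponentially decaying barrier\<close>

lemma has_real_derivative_comp_sqrt:
  fixes f f1 f2 :: "real \<Rightarrow> real"
  assumes d1: "\<And>r. r > 0 \<Longrightarrow> (f has_real_derivative f1 r) (at r)"
    and d2: "\<And>r. r > 0 \<Longrightarrow> (f1 has_real_derivative f2 r) (at r)"
    and s: "s > 0"
  shows "((\<lambda>s. f (sqrt s)) has_real_derivative f1 (sqrt s) / (2 * sqrt s)) (at s)"
    and "((\<lambda>s. f1 (sqrt s) / (2 * sqrt s)) has_real_derivative
            f2 (sqrt s) / (4 * s) - f1 (sqrt s) / (4 * s * sqrt s)) (at s)"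
proof -
  have sq: "sqrt s > 0" using s by simp
  have ds: "(sqrt has_real_derivative inverse (sqrt s) / 2) (at s)" using DERIV_real_sqrt[OF s] .
  show "((\<lambda>s. f (sqrt s)) has_real_derivative f1 (sqrt s) / (2 * sqrt s)) (at s)"
    using DERIV_chain2[OF d1[OF sq] ds] by (simp add: divide_simps mult.commute)
  have "((\<lambda>s. f1 (sqrt s) / (2 * sqrt s)) has_real_derivative
     (f2 (sqrt s) * (inverse (sqrt s) / 2) * (2 * sqrt s) - f1 (sqrt s) * (2 * (inverse (sqrt s) / 2)))
       / (2 * sqrt s * (2 * sqrt s))) (at s)"
    using DERIV_divide[OF DERIV_chain2[OF d2[OF sq] ds] DERIV_cmult[OF ds, of 2]] sq by simp
  moreover have "(f2 (sqrt s) * (inverse (sqrt s) / 2) * (2 * sqrt s) - f1 (sqrt s) * (2 * (inverse (sqrt s) / 2)))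
       / (2 * sqrt s * (2 * sqrt s)) = f2 (sqrt s) / (4 * s) - f1 (sqrt s) / (4 * s * sqrt s)"
  proof -
    have ss: "sqrt s * sqrt s = s" using s by simp
    show ?thesis using sq s by (simp add: field_simps ss)
  qed
  ultimately show "((\<lambda>s. f1 (sqrt s) / (2 * sqrt s)) has_real_derivative
            f2 (sqrt s) / (4 * s) - f1 (sqrt s) / (4 * s * sqrt s)) (at s)" by simp
qed

definition decay_profile :: "real \<Rightarrow> real" where
  "decay_profile r = sqrt r * exp (- sqrt 6 * r)"

lemma sqrt6_bounds: "2 \<le> sqrt (6::real)" "sqrt (6::real) \<le> 5/2"
proof -
  show "2 \<le> sqrt (6::real)" using real_le_rsqrt[of 2 6] by simp
  have "sqrt (6::real) \<le> sqrt ((5/2)^2)" by (simp add: power2_eq_square)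
  thus "sqrt (6::real) \<le> 5/2" by simp
qed

lemma decay_profile_derivatives:
  defines "f1 \<equiv> \<lambda>r. decay_profile r * (1 / (2 * r) - sqrt 6)"
    and "f2 \<equiv> \<lambda>r. decay_profile r * ((1 / (2 * r) - sqrt 6)^2 - 1 / (2 * r^2))"
  assumes r: "r > 0"
  shows "(decay_profile has_real_derivative f1 r) (at r)"
    and "(f1 has_real_derivative f2 r) (at r)"
    and "f2 r + f1 r / r = decay_profile r * (6 - 2 * sqrt 6 / r + 1 / (4 * r^2))"
proof -
  have sq: "sqrt r > 0" and ss: "sqrt r * sqrt r = r" using r by simp_all
  have "(decay_profile has_real_derivative
          inverse (sqrt r) / 2 * exp (- sqrt 6 * r) + sqrt r * (exp (- sqrt 6 * r) * (- sqrt 6))) (at r)"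
    unfolding decay_profile_def[abs_def] using r by (auto intro!: derivative_eq_intros)
  moreover have "inverse (sqrt r) / 2 * exp (- sqrt 6 * r) + sqrt r * (exp (- sqrt 6 * r) * (- sqrt 6)) = f1 r"
    unfolding f1_def decay_profile_def using sq r by (simp add: field_simps ss)
  ultimately show d1: "(decay_profile has_real_derivative f1 r) (at r)" by simp
  have "((\<lambda>r. 1 / (2 * r) - sqrt 6) has_real_derivative - 1 / (2 * r^2)) (at r)"
    using r by (auto intro!: derivative_eq_intros simp: power2_eq_square field_simps)
  from DERIV_mult[OF d1 this]
  show "(f1 has_real_derivative f2 r) (at r)"
    unfolding f1_def f2_def by (simp add: f1_def algebra_simps power2_eq_square)
  have "sqrt 6 ^ 2 = (6::real)" by simp
  thus "f2 r + f1 r / r = decay_profile r * (6 - 2 * sqrt 6 / r + 1 / (4 * r^2))"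
    unfolding f1_def f2_def using r by (simp add: field_simps power2_eq_square)
qed

lemma decay_profile_nonneg: "0 \<le> r \<Longrightarrow> 0 \<le> decay_profile r"
  by (simp add: decay_profile_def)

lemma decay_profile_pos: "0 < r \<Longrightarrow> 0 < decay_profile r"
  by (simp add: decay_profile_def)

lemma continuous_on_decay_profile_dist: "continuous_on A (\<lambda>z. decay_profile (cmod (z - c)))"
  unfolding decay_profile_def by (intro continuous_intros)

lemma decay_profile_antimono:
  assumes "1 \<le> x" "x \<le> y" shows "decay_profile y \<le> decay_profile x"
proof -
  define d where "d = y - x"
  have d0: "d \<ge> 0" using assms by (simp add: d_def)
  have "y \<le> x * (1 + d)^2"
  proof -
    have "x * (1 + d)^2 = x + 2 * (x * d) + x * d^2" by (simp add: power2_eq_square algebra_simps)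
    moreover have "x * d \<ge> d" using assms d0 mult_right_mono[of 1 x d] by simp
    moreover have "x * d^2 \<ge> 0" using assms by simp
    ultimately show ?thesis using d0 by (simp add: d_def)
  qed
  hence "sqrt y \<le> sqrt x * (1 + d)" using d0 by (metis real_sqrt_le_mono real_sqrt_mult real_sqrt_abs abs_of_nonneg add_nonneg_nonneg zero_le_one)
  also have "\<dots> \<le> sqrt x * exp (sqrt 6 * d)"
  proof -
    have "1 + d \<le> exp d" by (rule exp_ge_add_one_self)
    also have "\<dots> \<le> exp (sqrt 6 * d)" using sqrt6_bounds(1) d0 mult_right_mono[of 1 "sqrt 6" d] by simp
    finally show ?thesis by (intro mult_left_mono) (use assms in auto)
  qed
  finally have "sqrt y * exp (- sqrt 6 * y) \<le> sqrt x * exp (sqrt 6 * d) * exp (- sqrt 6 * y)"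
    by (intro mult_right_mono) auto
  also have "\<dots> = sqrt x * exp (- sqrt 6 * x)"
    by (simp add: d_def algebra_simps flip: exp_add)
  finally show ?thesis by (simp add: decay_profile_def)
qed

lemma decay_profile_shift:
  assumes "2 * K \<le> r" "K \<ge> 0"
  shows "decay_profile (r - 2 * K) \<le> exp (2 * K * sqrt 6) * (sqrt r * exp (- sqrt 6 * r))"
proof -
  have "sqrt (r - 2 * K) \<le> sqrt r" using assms by simp
  moreover have "exp (- sqrt 6 * (r - 2 * K)) = exp (2 * K * sqrt 6) * exp (- sqrt 6 * r)"
    by (simp add: algebra_simps flip: exp_add)
  ultimately show ?thesis unfolding decay_profile_def
    by (simp add: mult_right_mono mult.left_commute)
qed

lemma laplacian_le_decay_barrier_at_local_max:
  assumes sm: "smooth_on S u" and bS: "ball z \<delta> \<subseteq> S" and \<delta>: "\<delta> > 0"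
    and nc: "c \<notin> ball z \<delta>"
    and mx: "\<And>w. w \<in> ball z \<delta> \<Longrightarrow>
               u w - L * decay_profile (cmod (w - c)) \<le> u z - L * decay_profile (cmod (z - c))"
  shows "laplacian u z \<le> L * decay_profile (cmod (z - c)) *
           (6 - 2 * sqrt 6 / cmod (z - c) + 1 / (4 * (cmod (z - c))^2))"
proof -
  define f1 where "f1 = (\<lambda>r. decay_profile r * (1 / (2 * r) - sqrt 6))"
  define f2 where "f2 = (\<lambda>r. decay_profile r * ((1 / (2 * r) - sqrt 6)^2 - 1 / (2 * r^2)))"
  have d1: "\<And>r. r > 0 \<Longrightarrow> (decay_profile has_real_derivative f1 r) (at r)"
    and d2: "\<And>r. r > 0 \<Longrightarrow> (f1 has_real_derivative f2 r) (at r)"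
    and lap: "\<And>r. r > 0 \<Longrightarrow> f2 r + f1 r / r = decay_profile r * (6 - 2 * sqrt 6 / r + 1 / (4 * r^2))"
    unfolding f1_def f2_def by (rule decay_profile_derivatives; simp)+
  define g1 where "g1 = (\<lambda>s. L * (f1 (sqrt s) / (2 * sqrt s)))"
  define g2 where "g2 = (\<lambda>s. L * (f2 (sqrt s) / (4 * s) - f1 (sqrt s) / (4 * s * sqrt s)))"
  define r where "r = cmod (z - c)"
  have r: "r > 0" using nc \<delta> by (auto simp: r_def)
  have "laplacian u z \<le> 4 * r^2 * g2 (r^2) + 4 * g1 (r^2)"
    unfolding r_def
  proof (rule laplacian_le_radial_at_local_max[OF sm bS \<delta>, where U = "{0<..}"])
    show "((\<lambda>s. L * decay_profile (sqrt s)) has_real_derivative g1 s) (at s)" if "s \<in> {0<..}" for s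
      unfolding g1_def using has_real_derivative_comp_sqrt(1)[OF d1 d2] that by (intro DERIV_cmult) simp
    show "(g1 has_real_derivative g2 s) (at s)" if "s \<in> {0<..}" for s
      unfolding g1_def g2_def using has_real_derivative_comp_sqrt(2)[OF d1 d2] that by (intro DERIV_cmult) simp
    show "(cmod (w - c))^2 \<in> {0<..}" if "w \<in> ball z \<delta>" for w
      using nc that by auto
    show "u w - L * decay_profile (sqrt ((cmod (w - c))^2))
          \<le> u z - L * decay_profile (sqrt ((cmod (z - c))^2))" if "w \<in> ball z \<delta>" for w
      using mx[OF that] by simp
  qed
  also have "4 * r^2 * g2 (r^2) + 4 * g1 (r^2) = L * (f2 r + f1 r / r)"
    using r by (simp add: g1_def g2_def field_simps power2_eq_square)
  finally show ?thesis using lap[OF r] by (simp add: r_def mult.assoc)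
qed

lemma no_local_max_above_decay_barrier:
  assumes sm: "smooth_on S u" and bS: "ball z \<delta> \<subseteq> S" and \<delta>: "\<delta> > 0"
    and nc: "c \<notin> ball z \<delta>"
    and eq: "laplacian u z = tzitzeica (u z)"
    and far: "1 \<le> cmod (z - c)" and small: "u z \<le> 1 / cmod (z - c)"
    and L: "L \<ge> 0" and above: "L * decay_profile (cmod (z - c)) < u z"
    and mx: "\<And>w. w \<in> ball z \<delta> \<Longrightarrow>
               u w - L * decay_profile (cmod (w - c)) \<le> u z - L * decay_profile (cmod (z - c))"
  shows False
proof -
  define d where "d = cmod (z - c)"
  define B where "B = L * decay_profile d"
  define Q where "Q = 6 - 2 * sqrt 6 / d + 1 / (4 * d^2)"
  have d: "d \<ge> 1" "d > 0" using far unfolding d_def by linarith+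
  have B0: "B \<ge> 0" using L decay_profile_nonneg[of d] d by (simp add: B_def)
  have U0: "u z \<ge> 0" using above B0 by (simp add: B_def d_def)
  have "2 * sqrt 6 / d \<le> 5" using sqrt6_bounds d by (simp add: divide_simps)
  moreover have "0 \<le> 1 / (4 * d^2)" by simp
  ultimately have Q0: "Q > 0" unfolding Q_def by linarith
  have "4 * (1 / d) \<le> 2 * sqrt 6 / d" using sqrt6_bounds d by (simp add: divide_simps)
  moreover have "1 / (4 * d^2) \<le> 1 / d" using d by (simp add: divide_simps power2_eq_square)
  moreover have "u z \<le> 1 / d" using small by (simp add: d_def)
  ultimately have QU: "Q \<le> 6 - 3 * u z" unfolding Q_def by linarith
  have "laplacian u z \<le> B * Q"
    unfolding B_def Q_def d_def by (rule laplacian_le_decay_barrier_at_local_max[OF sm bS \<delta> nc mx])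
  hence "tzitzeica (u z) \<le> B * Q" using eq by simp
  also have "\<dots> < u z * Q" using above Q0 by (simp add: B_def d_def)
  also have "\<dots> \<le> u z * (6 - 3 * u z)" using QU U0 by (simp add: mult_left_mono)
  also have "\<dots> = 6 * u z - 3 * (u z)^2" by (simp add: power2_eq_square algebra_simps)
  also have "\<dots> \<le> tzitzeica (u z)" by (rule tzitzeica_ge_linearization[OF U0])
  finally show False by simp
qed

section \<open>Geometry of the gluing maps\<close>

definition half_sqrt3 :: real where "half_sqrt3 = sqrt 3 / 2"

lemma half_sqrt3_sq: "half_sqrt3 * half_sqrt3 = 3/4"
  by (simp add: half_sqrt3_def)

lemma half_sqrt3_bounds: "0.866 < half_sqrt3" "half_sqrt3 < 0.8661"
proof -
  have "(1.732::real)^2 < 3" by (simp add: power2_eq_square)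
  from real_less_rsqrt[OF this] show "0.866 < half_sqrt3" by (simp add: half_sqrt3_def)
  have "sqrt 3 < sqrt ((1.7322::real)^2)" by (simp only: real_sqrt_less_iff) (simp add: power2_eq_square)
  thus "half_sqrt3 < 0.8661" by (simp add: half_sqrt3_def)
qed

lemma cis_120: "cis (2 * pi / 3) = Complex (-1/2) half_sqrt3"
  by (simp add: cis.ctr cos_120 sin_120 half_sqrt3_def)

lemma glue_map_eq:
  "glue_map a' b' b z = Complex (-1/2) half_sqrt3 * (z - \<i> * of_real (b' - a')) + \<i> * of_real b"
  by (simp add: glue_map_def cis_120)

lemma polar_form_lower_half_plane:
  assumes "Im v < 0"
  shows "v = of_real (cmod v) * cis (- arccos (Re v / cmod v))"
proof -
  define q where "q = Re v / cmod v"
  have v0: "cmod v > 0" using assms by auto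
  have q: "\<bar>q\<bar> \<le> 1" using abs_Re_le_cmod[of v] v0 by (simp add: q_def abs_div)
  have "1 - q^2 = ((cmod v)^2 - (Re v)^2) / (cmod v)^2"
    using v0 by (simp add: q_def power_divide field_simps)
  hence "cmod v * sqrt (1 - q^2) = sqrt ((cmod v)^2 - (Re v)^2)"
    using v0 by (simp add: real_sqrt_divide)
  also have "\<dots> = - Im v" using assms by (simp add: cmod_power2)
  finally have "cmod v * sqrt (1 - q^2) = - Im v" .
  moreover have "cmod v * q = Re v" using v0 by (simp add: q_def)
  ultimately show ?thesis
    using q by (simp add: complex_eq_iff cis.ctr sin_arccos q_def[symmetric])
qed

lemma bot_sectorI:
  assumes "Re z \<ge> 0" "Im z < B - A" "Re z \<le> sqrt 3 * (B - A - Im z)"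
  shows "z \<in> bot_sector A B"
proof -
  define v where "v = z - \<i> * of_real (B - A)"
  define q where "q = Re v / cmod v"
  have im: "Im v < 0" and re: "0 \<le> Re v" "Re v \<le> sqrt 3 * (- Im v)"
    using assms by (simp_all add: v_def)
  have v0: "cmod v > 0" using im by auto
  have q: "0 \<le> q" "q \<le> 1" using re abs_Re_le_cmod[of v] v0 by (auto simp: q_def)
  have "(2 * Re v)^2 \<le> (sqrt 3 * cmod v)^2"
  proof -
    have "(Re v)^2 \<le> 3 * (Im v)^2"
      using power_mono[OF re(2) re(1), of 2] by (simp add: power_mult_distrib)
    thus ?thesis by (simp add: power_mult_distrib cmod_power2)
  qed
  hence "2 * Re v \<le> sqrt 3 * cmod v" by (rule power2_le_imp_le) simp
  hence q32: "q \<le> sqrt 3 / 2" using v0 by (simp add: q_def divide_simps)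
  have "- pi/2 \<le> - arccos q" using arccos_le_pi2[OF q] by simp
  moreover have "- arccos q \<le> - pi/6"
  proof -
    have "arccos (sqrt 3 / 2) \<le> arccos q"
      using q q32 half_sqrt3_bounds by (intro arccos_le_arccos) (auto simp: half_sqrt3_def)
    moreover have "arccos (cos (pi/6)) = pi/6" by (rule arccos_cos) auto
    ultimately show ?thesis by (simp add: cos_30)
  qed
  moreover have "z = \<i> * of_real (B - A) + of_real (cmod v) * cis (- arccos q)"
    using polar_form_lower_half_plane[OF im] by (simp add: v_def q_def algebra_simps)
  ultimately show ?thesis
    unfolding bot_sector_def using v0 by (intro CollectI exI[of _ "cmod v"] exI[of _ "- arccos q"]) simp
qed

definition glue_inv :: "real \<Rightarrow> real \<Rightarrow> real \<Rightarrow> complex \<Rightarrow> complex" where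
  "glue_inv A' B' B w = Complex (-1/2) (- half_sqrt3) * (w - \<i> * of_real B) + \<i> * of_real (B' - A')"

lemma Re_glue_map: "Re (glue_map A' B' B z) = - Re z / 2 - half_sqrt3 * (Im z - (B' - A'))"
  by (simp add: glue_map_eq)
lemma Im_glue_map: "Im (glue_map A' B' B z) = half_sqrt3 * Re z - (Im z - (B' - A')) / 2 + B"
  by (simp add: glue_map_eq)
lemma Re_glue_inv: "Re (glue_inv A' B' B w) = - Re w / 2 + half_sqrt3 * (Im w - B)"
  by (simp add: glue_inv_def)
lemma Im_glue_inv: "Im (glue_inv A' B' B w) = - half_sqrt3 * Re w - (Im w - B) / 2 + (B' - A')"
  by (simp add: glue_inv_def)

lemma glue_map_glue_inv: "glue_map A' B' B (glue_inv A' B' B w) = w"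
proof -
  have "Re (glue_map A' B' B (glue_inv A' B' B w)) = Re w / 4 + (half_sqrt3 * half_sqrt3) * Re w"
    by (simp add: Re_glue_map Re_glue_inv Im_glue_inv field_simps)
  moreover have "Im (glue_map A' B' B (glue_inv A' B' B w)) = (half_sqrt3 * half_sqrt3) * (Im w - B) + (Im w - B) / 4 + B"
    by (simp add: Im_glue_map Re_glue_inv Im_glue_inv field_simps)
  ultimately show ?thesis by (simp add: complex_eq_iff half_sqrt3_sq field_simps)
qed

lemma norm_glue_map_diff: "cmod (glue_map A' B' B z - glue_map A' B' B z') = cmod (z - z')"
proof -
  have "glue_map A' B' B z - glue_map A' B' B z' = cis (2*pi/3) * (z - z')"
    by (simp add: glue_map_def algebra_simps)
  thus ?thesis by (simp add: norm_mult)
qed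

lemma half_sqrt3_mult_bounds:
  assumes "0 \<le> p"
  shows "433/500 * p \<le> half_sqrt3 * p" and "half_sqrt3 * p \<le> 8661/10000 * p"
  using mult_right_mono[OF less_imp_le[OF half_sqrt3_bounds(1)] assms]
    mult_right_mono[OF less_imp_le[OF half_sqrt3_bounds(2)] assms]
  by simp_all

lemma abs_half_sqrt3_mult: "\<bar>half_sqrt3 * B\<bar> \<le> 8661/10000 * \<bar>B\<bar>"
proof -
  have "\<bar>half_sqrt3 * B\<bar> = half_sqrt3 * \<bar>B\<bar>" using half_sqrt3_bounds by (simp add: abs_mult)
  thus ?thesis using half_sqrt3_mult_bounds[of "\<bar>B\<bar>"] by simp
qed

lemma norm_glue_map_0:
  assumes "\<bar>A'\<bar> \<le> K" "\<bar>B'\<bar> \<le> K" "\<bar>B\<bar> \<le> K"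
  shows "cmod (glue_map A' B' B 0) \<le> 3 * K"
proof -
  have "glue_map A' B' B 0 = cis (2*pi/3) * (- (\<i> * of_real (B' - A'))) + \<i> * of_real B"
    by (simp add: glue_map_def)
  hence "cmod (glue_map A' B' B 0) \<le> cmod (cis (2*pi/3) * (- (\<i> * of_real (B' - A')))) + cmod (\<i> * of_real B)"
    by (metis norm_triangle_ineq)
  also have "\<dots> = \<bar>B' - A'\<bar> + \<bar>B\<bar>" by (simp add: norm_mult flip: of_real_diff)
  finally show ?thesis using assms by linarith
qed

lemma norm_glue_map_bounds:
  assumes "\<bar>A'\<bar> \<le> K" "\<bar>B'\<bar> \<le> K" "\<bar>B\<bar> \<le> K"
  shows "cmod (glue_map A' B' B z) \<ge> cmod z - 3 * K" and "cmod (glue_map A' B' B z) \<le> cmod z + 3 * K"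
proof -
  have e: "cmod (glue_map A' B' B z - glue_map A' B' B 0) = cmod z"
    using norm_glue_map_diff[of A' B' B z 0] by simp
  have "cmod z \<le> cmod (glue_map A' B' B z) + cmod (glue_map A' B' B 0)"
    using e norm_triangle_ineq4[of "glue_map A' B' B z" "glue_map A' B' B 0"] by linarith
  thus "cmod (glue_map A' B' B z) \<ge> cmod z - 3 * K" using norm_glue_map_0[OF assms] by linarith
  have "cmod (glue_map A' B' B z) \<le> cmod z + cmod (glue_map A' B' B 0)"
    using e norm_triangle_ineq2[of "glue_map A' B' B z" "glue_map A' B' B 0"] by linarith
  thus "cmod (glue_map A' B' B z) \<le> cmod z + 3 * K" using norm_glue_map_0[OF assms] by linarith
qed

lemma upper_part_transfer:
  assumes K: "\<bar>A'\<bar> \<le> K" "\<bar>B'\<bar> \<le> K" "\<bar>B\<bar> \<le> K"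
    and w: "Re w \<ge> 0" "Im w \<ge> 2 * Re w" "cmod w \<ge> 40 * (K + 1)"
  shows "glue_inv A' B' B w \<in> bot_sector A' B'"
    and "\<bar>Im (glue_inv A' B' B w)\<bar> < 2 * Re (glue_inv A' B' B w)"
    and "cmod w - 3 * K \<le> cmod (glue_inv A' B' B w)"
proof -
  define p where "p = Re w"
  define q where "q = Im w"
  have p0: "p \<ge> 0" and pq: "q \<ge> 2 * p" using w by (auto simp: p_def q_def)
  have "cmod w \<le> \<bar>p\<bar> + \<bar>q\<bar>" using cmod_le by (simp add: p_def q_def)
  hence qb: "q \<ge> 26 * K + 26" using w(3) p0 pq by (simp add: algebra_simps)
  have K0: "K \<ge> 0" using K by linarith
  note a = half_sqrt3_mult_bounds[OF p0] abs_half_sqrt3_mult[of B]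
  have "26 * K + 26 \<ge> 0" using K0 by simp
  hence q0: "q \<ge> 0" using qb by linarith
  note a2 = half_sqrt3_mult_bounds[OF q0]
  have sq: "sqrt 3 = 2 * half_sqrt3" by (simp add: half_sqrt3_def)
  define X where "X = Re (glue_inv A' B' B w)"
  define Y where "Y = Im (glue_inv A' B' B w)"
  have Xe: "X = - p / 2 + half_sqrt3 * q - half_sqrt3 * B" by (simp add: X_def Re_glue_inv p_def q_def algebra_simps)
  have Ye: "Y = - (half_sqrt3 * p) - q / 2 + B / 2 + (B' - A')" by (simp add: Y_def Im_glue_inv p_def q_def field_simps)
  have im2: "sqrt 3 * (B' - A' - Y) = 3/2 * p + half_sqrt3 * q - half_sqrt3 * B"
  proof -
    have "sqrt 3 * (B' - A' - Y) = 2 * (half_sqrt3 * half_sqrt3) * p + half_sqrt3 * q - half_sqrt3 * B"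
      unfolding Ye sq by (simp add: field_simps)
    thus ?thesis unfolding half_sqrt3_sq by simp
  qed
  have hb: "- \<bar>half_sqrt3 * B\<bar> \<le> half_sqrt3 * B" "half_sqrt3 * B \<le> \<bar>half_sqrt3 * B\<bar>" by auto
  have kb: "- K \<le> A'" "A' \<le> K" "- K \<le> B'" "B' \<le> K" "- K \<le> B" "B \<le> K" using K by auto
  show "glue_inv A' B' B w \<in> bot_sector A' B'"
    by (rule bot_sectorI; unfold X_def[symmetric] Y_def[symmetric] im2)
       (use a a2 hb kb K K0 p0 pq qb Xe Ye in linarith)+
  show "\<bar>Im (glue_inv A' B' B w)\<bar> < 2 * Re (glue_inv A' B' B w)"
    unfolding X_def[symmetric] Y_def[symmetric] abs_less_iff using a a2 hb kb K K0 p0 pq qb Xe Ye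
    by (intro conjI; linarith)
  show "cmod w - 3 * K \<le> cmod (glue_inv A' B' B w)"
    using norm_glue_map_bounds(2)[OF K, of "glue_inv A' B' B w"] by (simp add: glue_map_glue_inv)
qed

lemma lower_part_transfer:
  assumes K: "\<bar>A'\<bar> \<le> K" "\<bar>B'\<bar> \<le> K" "\<bar>B\<bar> \<le> K"
    and w: "Re w \<ge> 0" "Im w \<le> - 2 * Re w" "cmod w \<ge> 40 * (K + 1)"
  shows "w \<in> bot_sector A' B'"
    and "\<bar>Im (glue_map A' B' B w)\<bar> < 2 * Re (glue_map A' B' B w)"
    and "cmod w - 3 * K \<le> cmod (glue_map A' B' B w)"
proof -
  define p where "p = Re w"
  define r where "r = - Im w"
  define D where "D = B' - A'"
  have p0: "p \<ge> 0" and pr: "r \<ge> 2 * p" using w by (auto simp: p_def r_def)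
  have "cmod w \<le> \<bar>p\<bar> + \<bar>r\<bar>" using cmod_le by (simp add: p_def r_def)
  hence rb: "r \<ge> 26 * K + 26" using w(3) p0 pr by (simp add: algebra_simps)
  have K0: "K \<ge> 0" using K by linarith
  have D2: "\<bar>D\<bar> \<le> 2 * K" using K by (simp add: D_def)
  have "26 * K + 26 \<ge> 0" using K0 by simp
  hence r0: "r \<ge> 0" using rb by linarith
  note a = half_sqrt3_mult_bounds[OF p0] half_sqrt3_mult_bounds[OF r0] abs_half_sqrt3_mult[of D] abs_half_sqrt3_mult[of B]
  have hb: "- \<bar>half_sqrt3 * D\<bar> \<le> half_sqrt3 * D" "half_sqrt3 * D \<le> \<bar>half_sqrt3 * D\<bar>" by auto
  have kb: "- K \<le> A'" "A' \<le> K" "- K \<le> B'" "B' \<le> K" "- K \<le> B" "B \<le> K" "- 2 * K \<le> D" "D \<le> 2 * K"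
    using K D2 by auto
  have sq: "sqrt 3 = 2 * half_sqrt3" by (simp add: half_sqrt3_def)
  have e3: "sqrt 3 * (B' - A' - Im w) = 2 * (half_sqrt3 * D) + 2 * (half_sqrt3 * r)"
    by (simp add: sq D_def r_def algebra_simps)
  have i1: "Im w = - r" and i2: "Re w = p" and i3: "B' - A' = D" by (simp_all add: r_def p_def D_def)
  have b2: "Im w < B' - A'" unfolding i1 i3 using kb K0 rb by linarith
  have b3: "Re w \<le> sqrt 3 * (B' - A' - Im w)" unfolding e3 i2 using a hb kb K K0 p0 pr rb by linarith
  show "w \<in> bot_sector A' B'" using b2 b3 p0 i2 by (intro bot_sectorI) simp_all
  define X where "X = Re (glue_map A' B' B w)"
  define Y where "Y = Im (glue_map A' B' B w)"
  have Xe: "X = - p / 2 + half_sqrt3 * r + half_sqrt3 * D" by (simp add: X_def Re_glue_map p_def r_def D_def algebra_simps)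
  have Ye: "Y = half_sqrt3 * p + r / 2 + D / 2 + B" by (simp add: Y_def Im_glue_map p_def r_def D_def field_simps)
  show "\<bar>Im (glue_map A' B' B w)\<bar> < 2 * Re (glue_map A' B' B w)"
  proof -
    have hD: "half_sqrt3 * D \<ge> - (17322/10000) * K" using hb(1) a(5) D2 by linarith
    have X2: "2 * X = - p + 2 * (half_sqrt3 * r) + 2 * (half_sqrt3 * D)" unfolding Xe by simp
    have 1: "Y < 2 * X" unfolding X2 Ye using a(2) a(3) hD kb(6) kb(8) pr p0 rb K0 by linarith
    have 2: "- Y < 2 * X" unfolding X2 Ye using a(1) a(3) hD kb(5) kb(7) pr p0 rb K0 by linarith
    show ?thesis using 1 2 unfolding X_def Y_def by linarith
  qed
  show "cmod w - 3 * K \<le> cmod (glue_map A' B' B w)" using norm_glue_map_bounds(1)[OF K] by simp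
qed

text \<open>Compatible centres exist only up to shifts along \<open>cis (- pi / 6)\<close>, the direction of the lower
  edge of a bottom sector. Such shifts work in our favour: when a far point on a boundary ray of the
  central sector is transferred to the neighbouring chart, its distance to the centre can only grow.\<close>

definition edge_dir :: complex where "edge_dir = Complex half_sqrt3 (-1/2)"

lemma norm_diff_edge_dir_sq: "(cmod (x - of_real t * edge_dir))^2 = (cmod x)^2 - 2 * t * (half_sqrt3 * Re x - Im x / 2) + t^2"
proof -
  have "(cmod (x - of_real t * edge_dir))^2 = (Re x - t * half_sqrt3)^2 + (Im x + t/2)^2"
    by (simp add: cmod_power2 edge_dir_def)
  also have "\<dots> = (Re x)^2 + (Im x)^2 - 2 * t * (half_sqrt3 * Re x - Im x / 2) + t^2 * (half_sqrt3 * half_sqrt3 + 1/4)"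
    by (simp add: power2_eq_square field_simps)
  finally show ?thesis by (simp add: half_sqrt3_sq cmod_power2)
qed

lemma abs_edge_dir_component_le: "\<bar>half_sqrt3 * Re c - Im c / 2\<bar> \<le> 2 * cmod c"
proof -
  have "\<bar>half_sqrt3 * Re c\<bar> \<le> 8661/10000 * \<bar>Re c\<bar>" by (rule abs_half_sqrt3_mult)
  moreover have "\<bar>Re c\<bar> \<le> cmod c" "\<bar>Im c\<bar> \<le> cmod c" by (rule abs_Re_le_cmod, rule abs_Im_le_cmod)
  ultimately show ?thesis by linarith
qed

lemma upper_ray_center_dist_le:
  assumes K: "\<bar>A'\<bar> \<le> K" "\<bar>B'\<bar> \<le> K" "\<bar>B\<bar> \<le> K" and ci: "cmod ci \<le> K"
    and Gc: "glue_map A' B' B cj = ci + of_real t * edge_dir" and t0: "t \<ge> 0"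
    and w: "Re w \<ge> 0" "Im w = 2 * Re w" "cmod w \<ge> 100 * (K + 1)"
  shows "cmod (w - ci) \<le> cmod (glue_inv A' B' B w - cj)"
proof -
  define p where "p = Re w"
  have p0: "p \<ge> 0" using w by (simp add: p_def)
  have "cmod w \<le> \<bar>Re w\<bar> + \<bar>Im w\<bar>" by (rule cmod_le)
  hence pb: "3 * p \<ge> 100 * K + 100" using w p0 by (simp add: p_def algebra_simps)
  have K0: "K \<ge> 0" using K by linarith
  have e: "cmod (glue_inv A' B' B w - cj) = cmod (w - ci - of_real t * edge_dir)"
    using norm_glue_map_diff[of A' B' B "glue_inv A' B' B w" cj] by (simp add: glue_map_glue_inv Gc algebra_simps)
  define x where "x = w - ci"
  have ix: "half_sqrt3 * Re x - Im x / 2 = (half_sqrt3 * p - p) - (half_sqrt3 * Re ci - Im ci / 2)"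
    by (simp add: x_def p_def w(2) field_simps)
  have "half_sqrt3 * Re x - Im x / 2 \<le> 0"
    unfolding ix using half_sqrt3_mult_bounds(2)[OF p0] abs_edge_dir_component_le[of ci] ci pb K0 by linarith
  hence "t * (half_sqrt3 * Re x - Im x / 2) \<le> 0" using t0 by (simp add: mult_nonneg_nonpos)
  moreover have "t^2 \<ge> 0" by simp
  ultimately have "(cmod x)^2 \<le> (cmod (x - of_real t * edge_dir))^2" unfolding norm_diff_edge_dir_sq by linarith
  hence "cmod x \<le> cmod (x - of_real t * edge_dir)" by (rule power2_le_imp_le) simp
  thus ?thesis using e by (simp add: x_def)
qed

lemma lower_ray_center_dist_le:
  assumes K: "\<bar>A'\<bar> \<le> K" "\<bar>B'\<bar> \<le> K" "\<bar>B\<bar> \<le> K" and cp: "cmod cp \<le> K"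
    and Gc: "glue_map A' B' B ci = cp + of_real t * edge_dir" and t0: "t \<ge> 0" "t \<le> K"
    and w: "Re w \<ge> 0" "Im w = - 2 * Re w" "cmod w \<ge> 100 * (K + 1)"
  shows "cmod (w - ci) \<le> cmod (glue_map A' B' B w - cp)"
proof -
  define p where "p = Re w"
  define D where "D = B' - A'"
  have p0: "p \<ge> 0" using w by (simp add: p_def)
  have "cmod w \<le> \<bar>Re w\<bar> + \<bar>Im w\<bar>" by (rule cmod_le)
  hence pb: "3 * p \<ge> 100 * K + 100" using w p0 by (simp add: p_def algebra_simps)
  have K0: "K \<ge> 0" using K by linarith
  have D2: "\<bar>D\<bar> \<le> 2 * K" using K by (simp add: D_def)
  have e: "cmod (w - ci) = cmod (glue_map A' B' B w - cp - of_real t * edge_dir)"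
    using norm_glue_map_diff[of A' B' B w ci] by (simp add: Gc algebra_simps)
  define z where "z = glue_map A' B' B w"
  define x where "x = z - cp"
  have iw: "Im w = - 2 * p" using w(2) by (simp add: p_def)
  have "Re z = - p / 2 - half_sqrt3 * (Im w - D)" by (simp add: z_def Re_glue_map D_def p_def)
  also have "\<dots> = - p / 2 + half_sqrt3 * (2 * p) + half_sqrt3 * D" unfolding iw by (simp add: algebra_simps)
  finally have rz: "Re z = - p / 2 + half_sqrt3 * (2 * p) + half_sqrt3 * D" .
  have iz: "Im z = half_sqrt3 * p + p + D / 2 + B" by (simp add: z_def Im_glue_map p_def D_def w(2) field_simps)
  have "half_sqrt3 * Re z - Im z / 2 = (2 * (half_sqrt3 * half_sqrt3) - half_sqrt3 / 2) * p + (half_sqrt3 * half_sqrt3) * D - (half_sqrt3 * p + p + D / 2 + B) / 2"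
    unfolding rz iz by (simp add: algebra_simps)
  also have "\<dots> = (1 - half_sqrt3) * p + D / 2 - B / 2" unfolding half_sqrt3_sq by (simp add: field_simps)
  finally have iz2: "half_sqrt3 * Re z - Im z / 2 = (1 - half_sqrt3) * p + D / 2 - B / 2" .
  have ix: "half_sqrt3 * Re x - Im x / 2 = (p - half_sqrt3 * p) + D / 2 - B / 2 - (half_sqrt3 * Re cp - Im cp / 2)"
  proof -
    have "half_sqrt3 * Re x - Im x / 2 = (half_sqrt3 * Re z - Im z / 2) - (half_sqrt3 * Re cp - Im cp / 2)"
      by (simp add: x_def field_simps)
    thus ?thesis unfolding iz2 by (simp add: algebra_simps)
  qed
  have "half_sqrt3 * Re x - Im x / 2 \<ge> t / 2"
    unfolding ix using half_sqrt3_mult_bounds(2)[OF p0] abs_edge_dir_component_le[of cp] cp pb K0 D2 K(3) t0 by linarith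
  hence "t * (t / 2) \<le> t * (half_sqrt3 * Re x - Im x / 2)" using t0 by (intro mult_left_mono) auto
  moreover have "t^2 = 2 * (t * (t / 2))" by (simp add: power2_eq_square)
  ultimately have "(cmod (x - of_real t * edge_dir))^2 \<le> (cmod x)^2" unfolding norm_diff_edge_dir_sq by linarith
  hence "cmod (x - of_real t * edge_dir) \<le> cmod x" by (rule power2_le_imp_le) simp
  thus ?thesis using e by (simp add: x_def z_def)
qed

definition rot120 :: complex where "rot120 = Complex (-1/2) half_sqrt3"
definition rot240 :: complex where "rot240 = Complex (-1/2) (- half_sqrt3)"

lemma rot120_rot240: "rot120 * rot240 = 1"
  by (simp add: rot120_def rot240_def complex_eq_iff half_sqrt3_sq)

lemma rot240_sq: "rot240 ^ 2 = rot120"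
  by (simp add: power2_eq_square rot120_def rot240_def complex_eq_iff half_sqrt3_sq field_simps)

lemma rot240_cube: "rot240 ^ 3 = 1"
proof -
  have "rot240 ^ 3 = rot120 * rot240" by (simp add: power3_eq_cube rot240_sq[symmetric] power2_eq_square)
  thus ?thesis by (simp add: rot120_rot240)
qed

lemma rot240_ne_1: "rot240 \<noteq> 1"
  by (simp add: rot240_def complex_eq_iff)

lemma rot240_sq_ne_1: "rot240 ^ 2 \<noteq> 1"
  by (simp only: rot240_sq) (simp add: rot120_def complex_eq_iff)

lemma rot240_sq_edge_dir: "rot240 ^ 2 * edge_dir = \<i>"
  by (simp add: rot240_sq rot120_def edge_dir_def complex_eq_iff half_sqrt3_sq field_simps)

lemma rot240_edge_dir: "rot240 * edge_dir = Complex (- half_sqrt3) (-1/2)"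
  by (simp add: edge_dir_def rot240_def complex_eq_iff half_sqrt3_sq field_simps)

lemma glue_map_affine: "glue_map A' B' B z = rot120 * z + glue_map A' B' B 0"
  by (simp add: glue_map_eq rot120_def algebra_simps)

primrec center_seq :: "(nat \<Rightarrow> real) \<Rightarrow> (nat \<Rightarrow> complex) \<Rightarrow> complex \<Rightarrow> nat \<Rightarrow> complex" where
  "center_seq t \<gamma> c0 0 = c0"
| "center_seq t \<gamma> c0 (Suc i) = rot240 * (center_seq t \<gamma> c0 i + of_real (t i) * edge_dir - \<gamma> i)"

lemma center_seq_eq:
  "center_seq t \<gamma> c0 i = rot240 ^ i * c0 + center_seq (\<lambda>_. 0) \<gamma> 0 i + center_seq t (\<lambda>_. 0) 0 i"
  by (induction i) (simp_all add: algebra_simps)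

lemma center_seq_shifts_from_3:
  assumes "\<And>k. k \<ge> 3 \<Longrightarrow> t k = 0" and "i \<ge> 3"
  shows "center_seq t (\<lambda>_. 0) 0 i = rot240 ^ (i - 3) * center_seq t (\<lambda>_. 0) 0 3"
  using assms(2)
proof (induction i rule: dec_induct)
  case (step i)
  have "Suc i - 3 = Suc (i - 3)" using step.hyps by simp
  thus ?case using step assms(1)[of i] by (simp add: mult.assoc)
qed simp

lemma edge_dirs_positively_span:
  "\<exists>t0 t1 t2. t0 \<ge> 0 \<and> t1 \<ge> 0 \<and> t2 \<ge> 0 \<and>
     of_real t0 * edge_dir + of_real t1 * \<i> + of_real t2 * Complex (- half_sqrt3) (-1/2) = \<tau>"
proof -
  define X where "X = Re \<tau>"
  define Y where "Y = Im \<tau>"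
  define A where "A = X / half_sqrt3"
  define t2 where "t2 = 2 * \<bar>X\<bar> + \<bar>Y\<bar>"
  define t0 where "t0 = t2 + A"
  define t1 where "t1 = Y + 2 * \<bar>X\<bar> + \<bar>Y\<bar> + A / 2"
  have hp: "half_sqrt3 > 1/2" using half_sqrt3_bounds by simp
  have hA: "half_sqrt3 * A = X" using hp by (simp add: A_def)
  have "\<bar>X\<bar> \<le> half_sqrt3 * (2 * \<bar>X\<bar>)"
    using mult_right_mono[of 1 "2 * half_sqrt3" "\<bar>X\<bar>"] hp by (simp add: algebra_simps)
  hence "\<bar>A\<bar> \<le> 2 * \<bar>X\<bar>" using hp by (simp add: A_def abs_div divide_le_eq mult.commute)
  hence "t0 \<ge> 0" "t1 \<ge> 0" "t2 \<ge> 0" unfolding t0_def t1_def t2_def by linarith+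
  moreover have "of_real t0 * edge_dir + of_real t1 * \<i> + of_real t2 * Complex (- half_sqrt3) (-1/2) = \<tau>"
    using hA by (simp add: complex_eq_iff edge_dir_def t0_def t1_def t2_def X_def Y_def algebra_simps)
  ultimately show ?thesis by blast
qed

text \<open>Going once around the puncture composes \<open>n\<close> rotations by \<open>2 pi / 3\<close>. If \<open>3\<close> does not divide
  \<open>n\<close>, a closed sequence of centres exists with no shifts. Otherwise the closing condition is met with
  nonnegative shifts along three directions that positively span the plane.\<close>

lemma closed_center_seq_exists:
  assumes n: "n \<ge> 1"
  shows "\<exists>t c0. (\<forall>i. t i \<ge> 0) \<and> center_seq t \<gamma> c0 n = c0"
proof (cases "rot240 ^ n = 1")
  case False
  define c0 where "c0 = center_seq (\<lambda>_. 0) \<gamma> 0 n / (1 - rot240 ^ n)"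
  have "rot240 ^ n * c0 + center_seq (\<lambda>_. 0) \<gamma> 0 n = c0"
    using False by (simp add: c0_def divide_simps algebra_simps)
  moreover have "center_seq (\<lambda>_. 0) (\<lambda>_. 0) 0 i = 0" for i by (induction i) simp_all
  ultimately have "center_seq (\<lambda>_. 0) \<gamma> c0 n = c0" using center_seq_eq[of "\<lambda>_. 0" \<gamma> c0 n] by simp
  thus ?thesis by (intro exI[of _ "\<lambda>_. 0"] exI[of _ c0]) simp
next
  case True
  have n3: "n \<ge> 3"
  proof (rule ccontr)
    assume "\<not> n \<ge> 3"
    hence "n = 1 \<or> n = 2" using n by auto
    thus False using True rot240_ne_1 rot240_sq_ne_1 by auto
  qed
  obtain t0 t1 t2 where tt: "t0 \<ge> 0" "t1 \<ge> 0" "t2 \<ge> 0"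
    "of_real t0 * edge_dir + of_real t1 * \<i> + of_real t2 * Complex (- half_sqrt3) (-1/2)
       = - center_seq (\<lambda>_. 0) \<gamma> 0 n"
    using edge_dirs_positively_span by blast
  define t where "t = (\<lambda>k::nat. if k = 0 then t0 else if k = 1 then t1 else if k = 2 then t2 else 0)"
  have "center_seq t (\<lambda>_. 0) 0 3 = rot240 ^ 3 * (of_real t0 * edge_dir)
          + of_real t1 * (rot240 ^ 2 * edge_dir) + of_real t2 * (rot240 * edge_dir)"
    by (simp add: t_def numeral_3_eq_3 power2_eq_square power3_eq_cube algebra_simps)
  hence L3: "center_seq t (\<lambda>_. 0) 0 3 = - center_seq (\<lambda>_. 0) \<gamma> 0 n"
    unfolding rot240_cube rot240_sq_edge_dir rot240_edge_dir using tt(4) by simp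
  have "rot240 ^ n = rot240 ^ (n - 3) * rot240 ^ 3" using n3 by (simp flip: power_add)
  hence "rot240 ^ (n - 3) = 1" using True rot240_cube by simp
  hence "center_seq t (\<lambda>_. 0) 0 n = - center_seq (\<lambda>_. 0) \<gamma> 0 n"
    using center_seq_shifts_from_3[of t n] n3 L3 by (simp add: t_def)
  hence "center_seq t \<gamma> 0 n = 0" by (simp add: center_seq_eq[of t \<gamma> 0 n])
  moreover have "\<forall>i. t i \<ge> 0" using tt by (simp add: t_def)
  ultimately show ?thesis by blast
qed

lemma rotation_compatible_centers_exist:
  fixes \<gamma> :: "nat \<Rightarrow> complex"
  assumes n: "n \<ge> 1"
  shows "\<exists>c t. \<forall>i<n. t i \<ge> 0 \<and> rot120 * c (Suc i mod n) + \<gamma> i = c i + of_real (t i) * edge_dir"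
proof -
  obtain t c0 where t: "\<forall>i. t i \<ge> 0" and closed: "center_seq t \<gamma> c0 n = c0"
    using closed_center_seq_exists[OF n] by blast
  define c where "c = center_seq t \<gamma> c0"
  have "rot120 * c (Suc i mod n) + \<gamma> i = c i + of_real (t i) * edge_dir" if "i < n" for i
  proof -
    have "c (Suc i mod n) = c (Suc i)"
      using closed that by (cases "Suc i = n") (simp_all add: c_def)
    thus ?thesis by (simp add: c_def mult.assoc[symmetric] rot120_rot240)
  qed
  thus ?thesis using t by blast
qed

lemma compatible_centers_exist:
  assumes "n \<ge> 1"
  shows "\<exists>c t. \<forall>i<n. t i \<ge> 0 \<and>
           glue_map (a (Suc i mod n)) (b (Suc i mod n)) (b i) (c (Suc i mod n)) = c i + of_real (t i) * edge_dir"
  using rotation_compatible_centers_exist[OF assms, of "\<lambda>i. glue_map (a (Suc i mod n)) (b (Suc i mod n)) (b i) 0"]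
  by (metis glue_map_affine)

section \<open>The maximum principle on the glued charts\<close>

text \<open>Far from the origin, a point of a chart that is not in the central sector lies deep inside the
  sector \<open>T\<^sub>i\<close> or \<open>B\<^sub>i\<close>, which is glued to the neighbouring chart. So every far point has a
  representative in the central sector of some chart.\<close>

definition central_sector :: "complex set" where
  "central_sector = {w. \<bar>Im w\<bar> \<le> 2 * Re w}"

lemma closed_central_sector: "closed central_sector"
  unfolding central_sector_def by (intro closed_Collect_le continuous_intros)

lemma central_sector_subset_half_plane: "central_sector \<subseteq> closed_half_plane"
  by (auto simp: central_sector_def closed_half_plane_def)

lemma norm_le_3_Re_if_central: "w \<in> central_sector \<Longrightarrow> cmod w \<le> 3 * Re w"
  using cmod_le[of w] by (simp add: central_sector_def)

lemma finite_family_attains_sup: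
  fixes \<Phi> :: "nat \<Rightarrow> 'a::topological_space \<Rightarrow> real"
  assumes K: "compact K" "K \<noteq> {}" and n: "n \<ge> 1"
    and cont: "\<And>j. j < n \<Longrightarrow> continuous_on K (\<Phi> j)"
  obtains i p where "i < n" "p \<in> K" "\<And>j y. j < n \<Longrightarrow> y \<in> K \<Longrightarrow> \<Phi> j y \<le> \<Phi> i p"
proof -
  have "\<forall>j. \<exists>p. j < n \<longrightarrow> p \<in> K \<and> (\<forall>y\<in>K. \<Phi> j y \<le> \<Phi> j p)"
    using continuous_attains_sup[OF K cont] by blast
  then obtain pp where pp: "\<And>j. j < n \<Longrightarrow> pp j \<in> K \<and> (\<forall>y\<in>K. \<Phi> j y \<le> \<Phi> j (pp j))"
    by (metis (mono_tags))
  define M where "M = (\<lambda>j. \<Phi> j (pp j)) ` {..<n}"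
  have "0 \<in> {..<n}" using n by simp
  hence fin: "finite M" and ne: "M \<noteq> {}" by (auto simp: M_def)
  obtain i where i: "i < n" "\<Phi> i (pp i) = Max M" using Max_in[OF fin ne] by (auto simp: M_def)
  have "\<Phi> j y \<le> \<Phi> i (pp i)" if "j < n" "y \<in> K" for j y
  proof -
    have "\<Phi> j y \<le> \<Phi> j (pp j)" using pp[OF that(1)] that(2) by blast
    also have "\<dots> \<le> Max M" using Max_ge[OF fin] that(1) by (auto simp: M_def)
    finally show ?thesis using i(2) by simp
  qed
  thus ?thesis using that i(1) pp[OF i(1)] by blast
qed

locale glued_half_planes =
  fixes n :: nat and a b :: "nat \<Rightarrow> real" and u :: "nat \<Rightarrow> complex \<Rightarrow> real"
  assumes n_pos: "n \<ge> 1"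
    and smooth: "\<forall>i<n. \<exists>S. closed_half_plane \<subseteq> S \<and> smooth_on S (u i)"
    and glue: "\<forall>i<n. \<forall>z\<in>bot_sector (a (Suc i mod n)) (b (Suc i mod n)).
                 u (Suc i mod n) z = u i (glue_map (a (Suc i mod n)) (b (Suc i mod n)) (b i) z)"
    and eqn: "\<forall>i<n. \<forall>w\<in>closed_half_plane.
                 gauss_curv (u i) w = -1 + cubic_norm_sq (u i) (\<lambda>_. 1) w"
    and nonpos: "\<forall>i<n. \<forall>w\<in>closed_half_plane. gauss_curv (u i) w \<le> 0"
begin

lemma laplacian_chart: "i < n \<Longrightarrow> w \<in> closed_half_plane \<Longrightarrow> laplacian (u i) w = tzitzeica (u i w)"
  using eqn by (intro laplacian_eq_tzitzeica) blast

lemma chart_nonneg: "i < n \<Longrightarrow> w \<in> closed_half_plane \<Longrightarrow> 0 \<le> u i w"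
  using eqn nonpos by (intro nonneg_if_curvature_nonpos) blast+

lemma continuous_on_chart: "i < n \<Longrightarrow> continuous_on closed_half_plane (u i)"
  using smooth smooth_on_imp_continuous_on continuous_on_subset by blast

lemma central_quadratic_decay:
  assumes i: "i < n" and w: "w \<in> central_sector" "24 \<le> cmod w"
  shows "u i w \<le> 288 / (cmod w)^2"
proof -
  obtain S where S: "closed_half_plane \<subseteq> S" "smooth_on S (u i)" using smooth i by blast
  have Re3: "cmod w \<le> 3 * Re w" by (rule norm_le_3_Re_if_central[OF w(1)])
  hence "Re w \<ge> 8" using w(2) by linarith
  hence "u i w \<le> 32 / (Re w)^2"
    using half_plane_quadratic_decay[OF S(2,1)] laplacian_chart[OF i] by blast
  also have "\<dots> \<le> 288 / (cmod w)^2"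
  proof -
    have "(cmod w)^2 \<le> (3 * Re w)^2" using Re3 by (intro power_mono) auto
    thus ?thesis using w(2) \<open>Re w \<ge> 8\<close> by (simp add: divide_simps power_mult_distrib)
  qed
  finally show ?thesis .
qed

lemma central_eventually_small:
  assumes "\<eta> > 0"
  obtains R where "\<And>j z. j < n \<Longrightarrow> z \<in> central_sector \<Longrightarrow> R \<le> cmod z \<Longrightarrow> u j z < \<eta>"
proof
  fix j z assume j: "j < n" and z: "z \<in> central_sector" "24 + sqrt (288 / \<eta>) \<le> cmod z"
  have "288 / \<eta> < (cmod z)^2"
    using z(2) power_strict_mono[of "sqrt (288 / \<eta>)" "cmod z" 2] assms by simp
  hence "288 / (cmod z)^2 < \<eta>" using assms z(2) by (simp add: divide_simps mult.commute)
  moreover have "0 \<le> sqrt (288 / \<eta>)" using assms by simp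
  hence "24 \<le> cmod z" using z(2) by linarith
  ultimately show "u j z < \<eta>" using central_quadratic_decay[OF j z(1)] by fastforce
qed

definition prev_chart :: "nat \<Rightarrow> nat" where
  "prev_chart i = (if i = 0 then n - 1 else i - 1)"

lemma prev_chart_less: "i < n \<Longrightarrow> prev_chart i < n"
  using n_pos by (cases i) (simp_all add: prev_chart_def)

lemma Suc_prev_chart_mod: "i < n \<Longrightarrow> Suc (prev_chart i) mod n = i"
  using n_pos by (simp add: prev_chart_def)

end

locale glued_half_planes_with_centers = glued_half_planes +
  fixes c :: "nat \<Rightarrow> complex" and t :: "nat \<Rightarrow> real"
  assumes shift_nonneg: "i < n \<Longrightarrow> 0 \<le> t i"
    and center_glue: "i < n \<Longrightarrow>
       glue_map (a (Suc i mod n)) (b (Suc i mod n)) (b i) (c (Suc i mod n)) = c i + of_real (t i) * edge_dir"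
begin

definition chart_bound :: real where
  "chart_bound = (\<Sum>i<n. \<bar>a i\<bar> + \<bar>b i\<bar> + cmod (c i) + t i)"

lemma chart_bound:
  assumes "i < n"
  shows "\<bar>a i\<bar> \<le> chart_bound" "\<bar>b i\<bar> \<le> chart_bound" "cmod (c i) \<le> chart_bound" "t i \<le> chart_bound"
proof -
  have "\<bar>a i\<bar> + \<bar>b i\<bar> + cmod (c i) + t i \<le> chart_bound"
    unfolding chart_bound_def using assms shift_nonneg by (intro member_le_sum) auto
  thus "\<bar>a i\<bar> \<le> chart_bound" "\<bar>b i\<bar> \<le> chart_bound" "cmod (c i) \<le> chart_bound" "t i \<le> chart_bound"
    using shift_nonneg[OF assms] by (smt (verit) abs_ge_zero norm_ge_zero)+
qed

lemma chart_bound_nonneg: "0 \<le> chart_bound"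
  using chart_bound(1)[of 0] n_pos by fastforce

definition far_radius :: real where
  "far_radius = 100 * chart_bound + 700"

lemma upper_transfer:
  assumes i: "i < n" and w: "Re w \<ge> 0" "Im w \<ge> 2 * Re w" "far_radius \<le> cmod w"
  obtains z where "u (Suc i mod n) z = u i w" "\<bar>Im z\<bar> < 2 * Re z" "cmod w - 3 * chart_bound \<le> cmod z"
    "Im w = 2 * Re w \<Longrightarrow> cmod (w - c i) \<le> cmod (z - c (Suc i mod n))"
proof -
  define j where "j = Suc i mod n"
  have j: "j < n" using n_pos by (simp add: j_def)
  note K = chart_bound(1,2)[OF j] chart_bound(2)[OF i]
  have w100: "100 * (chart_bound + 1) \<le> cmod w" using w(3) by (simp add: far_radius_def)
  have "40 * (chart_bound + 1) \<le> cmod w" using w(3) chart_bound_nonneg by (simp add: far_radius_def)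
  note g = upper_part_transfer[OF K w(1,2) this]
  define z where "z = glue_inv (a j) (b j) (b i) w"
  have "u j z = u i w" using glue i g(1) glue_map_glue_inv by (simp add: z_def j_def)
  moreover have "cmod (w - c i) \<le> cmod (z - c j)" if "Im w = 2 * Re w"
    unfolding z_def using upper_ray_center_dist_le[OF K chart_bound(3)[OF i] _ shift_nonneg[OF i] w(1) that w100]
      center_glue[OF i] by (simp add: j_def)
  ultimately show thesis using that g(2,3) by (simp add: z_def j_def)
qed

lemma lower_transfer:
  assumes i: "i < n" and w: "Re w \<ge> 0" "Im w \<le> - 2 * Re w" "far_radius \<le> cmod w"
  obtains z where "u (prev_chart i) z = u i w" "\<bar>Im z\<bar> < 2 * Re z" "cmod w - 3 * chart_bound \<le> cmod z"
    "Im w = - 2 * Re w \<Longrightarrow> cmod (w - c i) \<le> cmod (z - c (prev_chart i))"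
proof -
  define p where "p = prev_chart i"
  have p: "p < n" "Suc p mod n = i" using prev_chart_less Suc_prev_chart_mod i by (simp_all add: p_def)
  note K = chart_bound(1,2)[OF i] chart_bound(2)[OF p(1)]
  have w100: "100 * (chart_bound + 1) \<le> cmod w" using w(3) by (simp add: far_radius_def)
  have "40 * (chart_bound + 1) \<le> cmod w" using w(3) chart_bound_nonneg by (simp add: far_radius_def)
  note g = lower_part_transfer[OF K w(1,2) this]
  define z where "z = glue_map (a i) (b i) (b p) w"
  have "u p z = u i w" using glue p g(1) by (force simp: z_def)
  moreover have "cmod (w - c i) \<le> cmod (z - c p)" if "Im w = - 2 * Re w"
    unfolding z_def using lower_ray_center_dist_le[OF K chart_bound(3)[OF p(1)] _ shift_nonneg[OF p(1)]
      chart_bound(4)[OF p(1)] w(1) that w100] center_glue[OF p(1)] p(2) by simp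
  ultimately show thesis using that g(2,3) by (simp add: z_def p_def)
qed

lemma central_representative:
  assumes i: "i < n" and w: "w \<in> closed_half_plane" "far_radius \<le> cmod w"
  obtains j z where "j < n" "u j z = u i w" "z \<in> central_sector" "cmod w - 3 * chart_bound \<le> cmod z"
proof -
  have Re0: "Re w \<ge> 0" using w(1) by (simp add: closed_half_plane_def)
  consider "w \<in> central_sector" | "Im w \<ge> 2 * Re w" | "Im w \<le> - 2 * Re w"
    by (fastforce simp: central_sector_def)
  thus thesis
  proof cases
    case 1 show thesis by (rule that[OF i refl 1]) (use chart_bound_nonneg in simp)
  next
    case 2
    from upper_transfer[OF i Re0 2 w(2)] obtain z where
      z: "u (Suc i mod n) z = u i w" "\<bar>Im z\<bar> < 2 * Re z" "cmod w - 3 * chart_bound \<le> cmod z" .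
    show thesis by (rule that[OF _ z(1) _ z(3)]) (use n_pos z(2) in \<open>auto simp: central_sector_def\<close>)
  next
    case 3
    from lower_transfer[OF i Re0 3 w(2)] obtain z where
      z: "u (prev_chart i) z = u i w" "\<bar>Im z\<bar> < 2 * Re z" "cmod w - 3 * chart_bound \<le> cmod z" .
    show thesis
      by (rule that[OF prev_chart_less[OF i] z(1) _ z(3)]) (use z(2) in \<open>auto simp: central_sector_def\<close>)
  qed
qed

end

context glued_half_planes_with_centers
begin

definition excess :: "real \<Rightarrow> nat \<Rightarrow> complex \<Rightarrow> real" where
  "excess L j z = u j z - L * decay_profile (cmod (z - c j))"

lemma continuous_on_excess: "j < n \<Longrightarrow> continuous_on central_sector (excess L j)"
  unfolding excess_def
  using continuous_on_subset[OF continuous_on_chart central_sector_subset_half_plane]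
  by (intro continuous_intros continuous_on_decay_profile_dist) auto

lemma decay_barrier_dominates_near:
  obtains L where "L \<ge> 0"
    "\<And>i w. i < n \<Longrightarrow> w \<in> central_sector \<Longrightarrow> far_radius \<le> cmod w \<Longrightarrow>
       cmod w \<le> far_radius + 6 * chart_bound \<Longrightarrow> u i w \<le> L * decay_profile (cmod (w - c i))"
proof -
  define A where "A = closed_half_plane \<inter> cball 0 (far_radius + 6 * chart_bound)"
  have "closed closed_half_plane" unfolding closed_half_plane_def by (intro closed_Collect_le continuous_intros)
  hence "compact A" unfolding A_def by (intro closed_Int_compact compact_cball)
  moreover have "continuous_on A (u i)" if "i < n" for i
    using continuous_on_subset[OF continuous_on_chart[OF that]] by (simp add: A_def)
  ultimately have "compact (\<Union>i<n. u i ` A)" by (intro compact_UN compact_continuous_image) auto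
  then obtain M where M: "\<forall>x\<in>(\<Union>i<n. u i ` A). \<bar>x\<bar> \<le> M"
    using compact_imp_bounded bounded_real by blast
  have M: "u i w \<le> M" if "i < n" "w \<in> A" for i w
  proof -
    have "u i w \<in> (\<Union>i<n. u i ` A)" using that by blast
    thus ?thesis using M abs_le_D1 by blast
  qed
  define F where "F = decay_profile (far_radius + 7 * chart_bound)"
  have F: "F > 0" unfolding F_def
    using chart_bound_nonneg by (intro decay_profile_pos) (simp add: far_radius_def)
  show thesis
  proof (rule that[of "max 0 M / F"])
    show "0 \<le> max 0 M / F" using F by simp
    fix i w assume i: "i < n" and w: "w \<in> central_sector" "far_radius \<le> cmod w"
      "cmod w \<le> far_radius + 6 * chart_bound"
    have "1 \<le> cmod (w - c i)" "cmod (w - c i) \<le> far_radius + 7 * chart_bound"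
      using norm_triangle_ineq2[of w "c i"] norm_triangle_ineq4[of w "c i"] chart_bound(3)[OF i] w(2,3)
        chart_bound_nonneg unfolding far_radius_def by linarith+
    hence "F \<le> decay_profile (cmod (w - c i))" unfolding F_def by (rule decay_profile_antimono)
    hence "max 0 M \<le> max 0 M / F * decay_profile (cmod (w - c i))"
      using F mult_left_mono[of F "decay_profile (cmod (w - c i))" "max 0 M / F"] by simp
    moreover have "w \<in> A" using w central_sector_subset_half_plane by (auto simp: A_def)
    ultimately show "u i w \<le> max 0 M / F * decay_profile (cmod (w - c i))" using M[OF i] by fastforce
  qed
qed

lemma open_central_representative:
  assumes i: "i < n" and p: "p \<in> central_sector" "far_radius \<le> cmod p" "1 \<le> cmod (p - c i)"
    and L: "L \<ge> 0"
  obtains j z where "j < n" "\<bar>Im z\<bar> < 2 * Re z" "cmod p - 3 * chart_bound \<le> cmod z"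
    "excess L i p \<le> excess L j z"
proof -
  have Re0: "Re p \<ge> 0" using p(1) by (simp add: central_sector_def)
  have moved: "excess L i p \<le> excess L j z"
    if "u j z = u i p" "cmod (p - c i) \<le> cmod (z - c j)" for j z
    using decay_profile_antimono[OF p(3) that(2)] L that(1) by (simp add: excess_def mult_left_mono)
  consider "\<bar>Im p\<bar> < 2 * Re p" | "Im p = 2 * Re p" | "Im p = - 2 * Re p"
    using p(1) by (fastforce simp: central_sector_def abs_if split: if_splits)
  thus thesis
  proof cases
    case 1 thus thesis using that[OF i] chart_bound_nonneg by simp
  next
    case 2
    obtain z where "u (Suc i mod n) z = u i p" "\<bar>Im z\<bar> < 2 * Re z" "cmod p - 3 * chart_bound \<le> cmod z"
      "cmod (p - c i) \<le> cmod (z - c (Suc i mod n))"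
      using upper_transfer[OF i Re0 _ p(2)] 2 by (metis order_refl)
    thus thesis using that[of "Suc i mod n" z] moved n_pos by simp
  next
    case 3
    obtain z where "u (prev_chart i) z = u i p" "\<bar>Im z\<bar> < 2 * Re z" "cmod p - 3 * chart_bound \<le> cmod z"
      "cmod (p - c i) \<le> cmod (z - c (prev_chart i))"
      using lower_transfer[OF i Re0 _ p(2)] 3 by (metis order_refl)
    thus thesis using that[OF prev_chart_less[OF i]] moved by simp
  qed
qed

lemma no_local_max_far_out:
  assumes j: "j < n" and L: "L \<ge> 0" and \<delta>: "\<delta> > 0"
    and ball: "ball \<zeta> \<delta> \<subseteq> {z. \<bar>Im z\<bar> < 2 * Re z \<and> far_radius < cmod z}"
    and above: "0 < excess L j \<zeta>"
    and mx: "\<And>y. y \<in> ball \<zeta> \<delta> \<Longrightarrow> excess L j y \<le> excess L j \<zeta>"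
  shows False
proof -
  obtain S where S: "closed_half_plane \<subseteq> S" "smooth_on S (u j)" using smooth j by blast
  have ball_H: "ball \<zeta> \<delta> \<subseteq> closed_half_plane" using ball by (auto simp: closed_half_plane_def)
  have "\<zeta> \<in> {z. \<bar>Im z\<bar> < 2 * Re z \<and> far_radius < cmod z}" using subsetD[OF ball] \<delta> by simp
  hence \<zeta>: "\<zeta> \<in> central_sector" "far_radius < cmod \<zeta>" by (auto simp: central_sector_def)
  have cj: "cmod (c j) \<le> chart_bound" "0 \<le> chart_bound" using chart_bound(3)[OF j] chart_bound_nonneg .
  have "c j \<notin> ball \<zeta> \<delta>" using ball cj by (fastforce simp: far_radius_def)
  moreover have d: "1 \<le> cmod (\<zeta> - c j)" "cmod (\<zeta> - c j) \<le> 2 * cmod \<zeta>"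
    using norm_triangle_ineq2[of \<zeta> "c j"] norm_triangle_ineq4[of \<zeta> "c j"] \<zeta>(2) cj
    by (auto simp: far_radius_def)
  moreover have "u j \<zeta> \<le> 1 / cmod (\<zeta> - c j)"
  proof -
    have "288 * cmod (\<zeta> - c j) \<le> (cmod \<zeta>)^2"
      using d(2) \<zeta>(2) cj mult_right_mono[of 576 "cmod \<zeta>" "cmod \<zeta>"]
      by (simp add: far_radius_def power2_eq_square)
    moreover have frac: "288 / A \<le> 1 / d" if "0 < d" "288 * d \<le> A" for A d :: real
      using that by (simp add: divide_simps mult.commute)
    ultimately have "288 / (cmod \<zeta>)^2 \<le> 1 / cmod (\<zeta> - c j)"
      using d(1) by (intro frac) auto
    moreover have "24 \<le> cmod \<zeta>" using \<zeta>(2) cj by (simp add: far_radius_def)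
    ultimately show ?thesis using central_quadratic_decay[OF j \<zeta>(1)] by fastforce
  qed
  moreover have "L * decay_profile (cmod (\<zeta> - c j)) < u j \<zeta>" using above by (simp add: excess_def)
  moreover have "u j y - L * decay_profile (cmod (y - c j)) \<le> u j \<zeta> - L * decay_profile (cmod (\<zeta> - c j))"
    if "y \<in> ball \<zeta> \<delta>" for y
    using mx[OF that] by (simp add: excess_def)
  ultimately show False
    using no_local_max_above_decay_barrier[OF S(2) _ \<delta> _ laplacian_chart[OF j] _ _ L] ball_H S(1)
      \<zeta> central_sector_subset_half_plane by blast
qed

lemma excess_attains_max_on_annulus:
  assumes "far_radius \<le> R"
  obtains i p where "i < n" "p \<in> central_sector" "far_radius \<le> cmod p" "cmod p \<le> R"
    "\<And>j z. j < n \<Longrightarrow> z \<in> central_sector \<Longrightarrow> far_radius \<le> cmod z \<Longrightarrow> cmod z \<le> R \<Longrightarrow>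
       excess L j z \<le> excess L i p"
proof -
  define A where "A = central_sector \<inter> {z. far_radius \<le> cmod z} \<inter> cball 0 R"
  have "compact A" unfolding A_def
    by (intro closed_Int_compact closed_Int closed_central_sector compact_cball closed_Collect_le continuous_intros)
  moreover have "of_real R \<in> A"
    using assms chart_bound_nonneg by (simp add: A_def central_sector_def far_radius_def)
  moreover have "continuous_on A (excess L j)" if "j < n" for j
    by (rule continuous_on_subset[OF continuous_on_excess[OF that]]) (auto simp: A_def)
  ultimately obtain i p where "i < n" "p \<in> A" "\<And>j z. j < n \<Longrightarrow> z \<in> A \<Longrightarrow> excess L j z \<le> excess L i p"
    using finite_family_attains_sup[OF _ _ n_pos] by blast
  thus thesis using that by (auto simp: A_def)
qed

lemma central_decay:
  obtains L where "L \<ge> 0"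
    "\<And>i w. i < n \<Longrightarrow> w \<in> central_sector \<Longrightarrow> far_radius \<le> cmod w \<Longrightarrow>
       u i w \<le> L * decay_profile (cmod (w - c i))"
proof -
  obtain L where L: "L \<ge> 0" and near: "\<And>i w. i < n \<Longrightarrow> w \<in> central_sector \<Longrightarrow> far_radius \<le> cmod w \<Longrightarrow>
       cmod w \<le> far_radius + 6 * chart_bound \<Longrightarrow> u i w \<le> L * decay_profile (cmod (w - c i))"
    using decay_barrier_dominates_near by blast
  have "excess L i w \<le> 0" if i: "i < n" and w: "w \<in> central_sector" "far_radius \<le> cmod w" for i w
  proof (rule ccontr)
    assume "\<not> excess L i w \<le> 0"
    hence \<eta>: "excess L i w > 0" by simp
    obtain R1 where small: "\<And>j z. j < n \<Longrightarrow> z \<in> central_sector \<Longrightarrow> R1 \<le> cmod z \<Longrightarrow> u j z < excess L i w"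
      using central_eventually_small[OF \<eta>] by blast
    have "far_radius \<le> max R1 (cmod w)" using w(2) by simp
    then obtain i1 p where i1: "i1 < n" and p: "p \<in> central_sector" "far_radius \<le> cmod p" "cmod p \<le> max R1 (cmod w)"
      and p_max: "\<And>j z. j < n \<Longrightarrow> z \<in> central_sector \<Longrightarrow> far_radius \<le> cmod z \<Longrightarrow> cmod z \<le> max R1 (cmod w) \<Longrightarrow>
         excess L j z \<le> excess L i1 p"
      using excess_attains_max_on_annulus[where L = L] by blast
    have w_le: "excess L i w \<le> excess L i1 p" using p_max[OF i w] by simp
    have p_far: "far_radius + 6 * chart_bound < cmod p"
      using near[OF i1 p(1,2)] w_le \<eta> by (force simp: excess_def)
    hence "1 \<le> cmod (p - c i1)"
      using norm_triangle_ineq2[of p "c i1"] chart_bound(3)[OF i1] chart_bound_nonneg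
      unfolding far_radius_def by linarith
    then obtain j \<zeta> where j: "j < n" and \<zeta>: "\<bar>Im \<zeta>\<bar> < 2 * Re \<zeta>" "cmod p - 3 * chart_bound \<le> cmod \<zeta>"
      and \<zeta>_max: "excess L i1 p \<le> excess L j \<zeta>"
      using open_central_representative[OF i1 p(1,2) _ L] by blast
    have "cmod \<zeta> < R1"
    proof (rule ccontr)
      assume "\<not> cmod \<zeta> < R1"
      hence "u j \<zeta> < excess L i w" using small[OF j] \<zeta>(1) by (simp add: central_sector_def)
      moreover have "0 \<le> L * decay_profile (cmod (\<zeta> - c j))" using L by (simp add: decay_profile_nonneg)
      ultimately show False using \<zeta>_max w_le by (simp add: excess_def)
    qed
    define V where "V = {z. \<bar>Im z\<bar> < 2 * Re z \<and> far_radius < cmod z \<and> cmod z < max R1 (cmod w)}"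
    have "open V" unfolding V_def by (intro open_Collect_conj open_Collect_less continuous_intros)
    moreover have "\<zeta> \<in> V" using \<zeta> p_far \<open>cmod \<zeta> < R1\<close> chart_bound_nonneg by (simp add: V_def)
    ultimately obtain \<delta> where \<delta>: "\<delta> > 0" "ball \<zeta> \<delta> \<subseteq> V" using openE by blast
    show False
    proof (rule no_local_max_far_out[OF j L \<delta>(1)])
      show "ball \<zeta> \<delta> \<subseteq> {z. \<bar>Im z\<bar> < 2 * Re z \<and> far_radius < cmod z}" using \<delta>(2) by (auto simp: V_def)
      show "0 < excess L j \<zeta>" using \<zeta>_max w_le \<eta> by linarith
      show "excess L j y \<le> excess L j \<zeta>" if "y \<in> ball \<zeta> \<delta>" for y
        using p_max[OF j, of y] \<delta>(2) that \<zeta>_max by (auto simp: V_def central_sector_def)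
    qed
  qed
  thus thesis using that[OF L] by (simp add: excess_def)
qed

lemma chart_decay:
  obtains C r0 where "C > 0" "r0 > 0" "\<And>i w. i < n \<Longrightarrow> w \<in> closed_half_plane \<Longrightarrow> r0 \<le> cmod w \<Longrightarrow>
     u i w \<le> C * sqrt (cmod w) * exp (- sqrt 6 * cmod w)"
proof -
  define K where "K = 3 * chart_bound"
  have K: "0 \<le> K" "chart_bound \<le> K" using chart_bound_nonneg by (simp_all add: K_def)
  obtain L where L: "L \<ge> 0" and decay: "\<And>i w. i < n \<Longrightarrow> w \<in> central_sector \<Longrightarrow> far_radius \<le> cmod w \<Longrightarrow>
       u i w \<le> L * decay_profile (cmod (w - c i))"
    using central_decay by blast
  define C where "C = L * exp (2 * K * sqrt 6) + 1"
  show thesis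
  proof (rule that[of C "far_radius + K"])
    show "C > 0" using L by (simp add: C_def add_nonneg_pos)
    show "far_radius + K > 0" using K chart_bound_nonneg by (simp add: far_radius_def)
    fix i w assume i: "i < n" and w: "w \<in> closed_half_plane" "far_radius + K \<le> cmod w"
    have "far_radius \<le> cmod w" using w(2) K by linarith
    then obtain j z where j: "j < n" and z: "u j z = u i w" "z \<in> central_sector" "cmod w - K \<le> cmod z"
      using central_representative[OF i w(1)] unfolding K_def by blast
    have "2 * K + 1 \<le> cmod w - 2 * K" and "cmod w - 2 * K \<le> cmod (z - c j)"
      using w(2) z(3) norm_triangle_ineq2[of z "c j"] chart_bound(3)[OF j] K
      by (auto simp: far_radius_def K_def)
    hence "decay_profile (cmod (z - c j)) \<le> decay_profile (cmod w - 2 * K)"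
      using K by (intro decay_profile_antimono) auto
    also have "\<dots> \<le> exp (2 * K * sqrt 6) * (sqrt (cmod w) * exp (- sqrt 6 * cmod w))"
      using w(2) K by (intro decay_profile_shift) (auto simp: far_radius_def K_def)
    finally have "u i w \<le> L * exp (2 * K * sqrt 6) * (sqrt (cmod w) * exp (- sqrt 6 * cmod w))"
      using decay[OF j z(2)] z w(2) K L by (smt (verit) mult.assoc mult_left_mono)
    also have "\<dots> \<le> C * (sqrt (cmod w) * exp (- sqrt 6 * cmod w))"
      by (intro mult_right_mono) (auto simp: C_def)
    finally show "u i w \<le> C * sqrt (cmod w) * exp (- sqrt 6 * cmod w)" by (simp add: mult.assoc)
  qed
qed

end

theorem corollary5p3:
  fixes n :: nat and a b :: "nat \<Rightarrow> real" and u :: "nat \<Rightarrow> complex \<Rightarrow> real"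
  assumes n_pos: "n \<ge> 1"
    and a_pos: "\<forall>i<n. a i > 0"
    and smooth: "\<forall>i<n. \<exists>S. closed_half_plane \<subseteq> S \<and> smooth_on S (u i)"
    and glue: "\<forall>i<n. \<forall>z\<in>bot_sector (a (Suc i mod n)) (b (Suc i mod n)).
                 u (Suc i mod n) z = u i (glue_map (a (Suc i mod n)) (b (Suc i mod n)) (b i) z)"
    and eqn: "\<forall>i<n. \<forall>w\<in>closed_half_plane.
                 gauss_curv (u i) w = -1 + cubic_norm_sq (u i) (\<lambda>_. 1) w"
    and nonpos: "\<forall>i<n. \<forall>w\<in>closed_half_plane. gauss_curv (u i) w \<le> 0"
  shows "\<exists>C r0. C > 0 \<and> r0 > 0 \<and>
           (\<forall>i<n. \<forall>w\<in>closed_half_plane. cmod w \<ge> r0 \<longrightarrow>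
              0 \<le> u i w \<and> u i w \<le> C * sqrt (cmod w) * exp (- sqrt 6 * cmod w))"
proof -
  interpret glued_half_planes n a b u
    using n_pos smooth glue eqn nonpos by unfold_locales
  obtain c t where "\<forall>i<n. t i \<ge> 0 \<and>
      glue_map (a (Suc i mod n)) (b (Suc i mod n)) (b i) (c (Suc i mod n)) = c i + of_real (t i) * edge_dir"
    using compatible_centers_exist[OF n_pos] by blast
  then interpret glued_half_planes_with_centers n a b u c t
    by unfold_locales blast+
  obtain C r0 where "C > 0" "r0 > 0" "\<And>i w. i < n \<Longrightarrow> w \<in> closed_half_plane \<Longrightarrow> r0 \<le> cmod w \<Longrightarrow>
      u i w \<le> C * sqrt (cmod w) * exp (- sqrt 6 * cmod w)"
    using chart_decay by blast
  thus ?thesis using chart_nonneg by blast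
qed

end
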